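(* Let $G$ be a finite graph on the vertex set $\{x_1,\ldots,x_n\}$ with no loops, no multiple edges and no isolated vertices, and for $q\geq 1$ let $\mathcal{G}(I(G)^q)$ denote the minimal set of monomial generators of $I(G)^q$. The following conditions are equivalent: (i) $\mathcal{G}(I(G)^q)$ is a polymatroid for some $q\geq 1$; (ii) $\mathcal{G}(I(G)^q)$ is a polymatroid for all $q\geq 1$; (iii) $G$ is a complete multipartite graph. Furthermore, if $G$ is a complete multipartite graph, then for all $q\geq 1$ the toric ideal $J_{\mathcal{G}(I(G)^q)}$ of $\mathcal{G}(I(G)^q)$ is generated by symmetric exchange binomials.
   Context: Let $S=K[x_1,\ldots,x_n]$ be a polynomial ring over a field $K$. A finite set $\mathcal{B}$ of monomials of $S$ is called a polymatroid if (i) all elements of $\mathcal{B}$ have the same degree and (ii) whenever $u=x_1^{a_1}\cdots x_n^{a_n}$ and $v=x_1^{b_1}\cdots x_n^{b_n}$ belong to $\mathcal{B}$ with $a_\xi>b_\xi$, there is $\rho$ with $a_\rho<b_\rho$ such that $x_\rho u/x_\xi\in\mathcal{B}$. The edge ideal $I(G)$ is the ideal of $S$ generated by the monomials $x_ix_j$ with $\{x_i,x_j\}$ an edge of $G$. For a finite set of monomials $\mathcal{B}=\{w_1,\ldots,w_s\}$, let $T=K[z_1,\ldots,z_s]$ and $\pi:T\to K[w_1,\ldots,w_s]$ be the $K$-algebra homomorphism with $\pi(z_i)=w_i$; the toric ideal of $\mathcal{B}$ is $J_{\mathcal{B}}=\ker\pi$. A symmetric exchange binomial of $\mathcal{B}$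 is a binomial $z_iz_j-z_{i_0}z_{j_0}$ where $w_i=x_1^{a_1}\cdots x_n^{a_n}$, $w_j=x_1^{b_1}\cdots x_n^{b_n}$, and there are indices $\xi,\rho$ with $a_\xi>b_\xi$, $a_\rho<b_\rho$ such that $w_{i_0}=x_\rho w_i/x_\xi$ and $w_{j_0}=x_\xi w_j/x_\rho$ both belong to $\mathcal{B}$. A complete multipartite graph is a graph whose vertex set is partitioned into $m\geq 2$ nonempty parts $V_1,\ldots,V_m$, with edges exactly the pairs $\{x,y\}$ with $x,y$ in different parts. *)

theory Defs
  imports Main "HOL-Library.Poly_Mapping" "HOL-Library.Multiset"
begin

text \<open>Monomials are exponent vectors (finitely supported maps to nat);
 polynomials over a field are finitely supported maps from monomials to coefficients.\<close>

definition simple_graph :: "'a set \<Rightarrow> 'a set set \<Rightarrow> bool" where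
  "simple_graph V E \<longleftrightarrow> finite V \<and>
     (\<forall>e\<in>E. \<exists>x y. x \<noteq> y \<and> x \<in> V \<and> y \<in> V \<and> e = {x, y})"

definition no_isolated :: "'a set \<Rightarrow> 'a set set \<Rightarrow> bool" where
  "no_isolated V E \<longleftrightarrow> (\<forall>x\<in>V. \<exists>e\<in>E. x \<in> e)"

definition complete_multipartite :: "'a set \<Rightarrow> 'a set set \<Rightarrow> bool" where
  "complete_multipartite V E \<longleftrightarrow> (\<exists>P. finite P \<and> card P \<ge> 2 \<and> {} \<notin> P \<and> \<Union>P = V \<and>
      (\<forall>A\<in>P. \<forall>B\<in>P. A \<noteq> B \<longrightarrow> A \<inter> B = {}) \<and>
      E = {{x, y} | x y. \<exists>A\<in>P. \<exists>B\<in>P. A \<noteq> B \<and> x \<in> A \<and> y \<in> B})"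

definition edge_mon :: "'a set \<Rightarrow> 'a \<Rightarrow>\<^sub>0 nat" where
  "edge_mon e = (\<Sum>x\<in>e. Poly_Mapping.single x 1)"

definition pow_gens :: "'a set set \<Rightarrow> nat \<Rightarrow> ('a \<Rightarrow>\<^sub>0 nat) set" where
  "pow_gens E q = {(\<Sum>e\<in>#M. edge_mon e) | M. size M = q \<and> set_mset M \<subseteq> E}"

definition mon_dvd :: "('a \<Rightarrow>\<^sub>0 nat) \<Rightarrow> ('a \<Rightarrow>\<^sub>0 nat) \<Rightarrow> bool" where
  "mon_dvd u v \<longleftrightarrow> (\<forall>x. Poly_Mapping.lookup u x \<le> Poly_Mapping.lookup v x)"

definition min_gens :: "'a set set \<Rightarrow> nat \<Rightarrow> ('a \<Rightarrow>\<^sub>0 nat) set" where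
  "min_gens E q = {u \<in> pow_gens E q. \<forall>v\<in>pow_gens E q. mon_dvd v u \<longrightarrow> v = u}"

definition mdeg :: "('a \<Rightarrow>\<^sub>0 nat) \<Rightarrow> nat" where
  "mdeg u = (\<Sum>x\<in>Poly_Mapping.keys u. Poly_Mapping.lookup u x)"

definition polymatroid :: "('a \<Rightarrow>\<^sub>0 nat) set \<Rightarrow> bool" where
  "polymatroid B \<longleftrightarrow> finite B \<and> (\<forall>u\<in>B. \<forall>v\<in>B. mdeg u = mdeg v) \<and>
     (\<forall>u\<in>B. \<forall>v\<in>B. \<forall>\<xi>. Poly_Mapping.lookup u \<xi> > Poly_Mapping.lookup v \<xi> \<longrightarrow>
        (\<exists>\<rho>. Poly_Mapping.lookup u \<rho> < Poly_Mapping.lookup v \<rho> \<and> u - Poly_Mapping.single \<xi> 1 + Poly_Mapping.single \<rho> 1 \<in> B))"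

text \<open>Polynomial ring T = K[z_w : w \<in> B]: variables are indexed by the monomials w of B.\<close>
definition T_ring :: "('a \<Rightarrow>\<^sub>0 nat) set \<Rightarrow> ((('a \<Rightarrow>\<^sub>0 nat) \<Rightarrow>\<^sub>0 nat) \<Rightarrow>\<^sub>0 'k::field) set" where
  "T_ring B = {p. \<forall>\<alpha>\<in>Poly_Mapping.keys p. Poly_Mapping.keys \<alpha> \<subseteq> B}"

text \<open>The K-algebra homomorphism \<pi> : T \<rightarrow> S with \<pi>(z_w) = w.\<close>
definition toric_map :: "((('a \<Rightarrow>\<^sub>0 nat) \<Rightarrow>\<^sub>0 nat) \<Rightarrow>\<^sub>0 'k::field) \<Rightarrow> (('a \<Rightarrow>\<^sub>0 nat) \<Rightarrow>\<^sub>0 'k)" where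
  "toric_map p = (\<Sum>\<alpha>\<in>Poly_Mapping.keys p. Poly_Mapping.single 0 (Poly_Mapping.lookup p \<alpha>) *
       (\<Prod>w\<in>Poly_Mapping.keys \<alpha>. (Poly_Mapping.single w 1) ^ (Poly_Mapping.lookup \<alpha> w)))"

definition toric_ideal :: "('a \<Rightarrow>\<^sub>0 nat) set \<Rightarrow> ((('a \<Rightarrow>\<^sub>0 nat) \<Rightarrow>\<^sub>0 nat) \<Rightarrow>\<^sub>0 'k::field) set" where
  "toric_ideal B = {p \<in> T_ring B. toric_map p = 0}"

definition ideal_gen :: "'r::comm_ring_1 set \<Rightarrow> 'r set \<Rightarrow> 'r set" where
  "ideal_gen R F = {sum_list (map2 (*) cs fs) | cs fs.
       length cs = length fs \<and> set cs \<subseteq> R \<and> set fs \<subseteq> F}"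

definition zmon :: "('a \<Rightarrow>\<^sub>0 nat) \<Rightarrow> ('a \<Rightarrow>\<^sub>0 nat) \<Rightarrow> ((('a \<Rightarrow>\<^sub>0 nat) \<Rightarrow>\<^sub>0 nat) \<Rightarrow>\<^sub>0 'k::field)" where
  "zmon u v = Poly_Mapping.single (Poly_Mapping.single u 1 + Poly_Mapping.single v 1) 1"

definition sym_exchange_binomials ::
  "('a \<Rightarrow>\<^sub>0 nat) set \<Rightarrow> ((('a \<Rightarrow>\<^sub>0 nat) \<Rightarrow>\<^sub>0 nat) \<Rightarrow>\<^sub>0 'k::field) set" where
  "sym_exchange_binomials B = {zmon u v - zmon u0 v0 | u v u0 v0.
      u \<in> B \<and> v \<in> B \<and> (\<exists>\<xi> \<rho>. Poly_Mapping.lookup u \<xi> > Poly_Mapping.lookup v \<xi> \<and> Poly_Mapping.lookup u \<rho> < Poly_Mapping.lookup v \<rho> \<and>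
         u0 = u - Poly_Mapping.single \<xi> 1 + Poly_Mapping.single \<rho> 1 \<and>
         v0 = v - Poly_Mapping.single \<rho> 1 + Poly_Mapping.single \<xi> 1 \<and> u0 \<in> B \<and> v0 \<in> B)}"

end

theory Submission
  imports Defs "HOL-Library.Disjoint_Sets"
begin

text \<open>For a simple graph every product of q edges has degree 2q, so these products are the
  minimal generators of I(G)^q. If a vertex z is adjacent to neither end of an edge xy, then the
  exchange property applied to zw(xy)^(q-1) and (xy)^q yields a generator in which z has no
  neighbour, which is impossible; otherwise non-adjacency is an equivalence relation and G is
  complete multipartite. For a complete multipartite graph with parts P the generators are the
  monomials of degree 2q with degree at most q on every part. This set has the symmetric exchange
  property, hence is a polymatroid. Its toric ideal is spanned by binomials z^X - z^Y with X, Y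
  multisets of generators of equal product, and any two such multisets are connected by symmetric
  exchanges: an element of X is moved towards an element w of Y, one unit at a time, until it
  equals w, and the rest is handled by induction.\<close>

abbreviation lookup :: "('b \<Rightarrow>\<^sub>0 'c::zero) \<Rightarrow> 'b \<Rightarrow> 'c" where
  "lookup \<equiv> Poly_Mapping.lookup"

abbreviation keys :: "('b \<Rightarrow>\<^sub>0 'c::zero) \<Rightarrow> 'b set" where
  "keys \<equiv> Poly_Mapping.keys"

abbreviation single :: "'b \<Rightarrow> 'c::zero \<Rightarrow> 'b \<Rightarrow>\<^sub>0 'c" where
  "single \<equiv> Poly_Mapping.single"

section \<open>Monomials\<close>

definition move_unit :: "('a \<Rightarrow>\<^sub>0 nat) \<Rightarrow> 'a \<Rightarrow> 'a \<Rightarrow> 'a \<Rightarrow>\<^sub>0 nat" where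
  "move_unit u a b = u - single a 1 + single b 1"

definition deg_on :: "('a \<Rightarrow>\<^sub>0 nat) \<Rightarrow> 'a set \<Rightarrow> nat" where
  "deg_on u A = (\<Sum>x\<in>A. lookup u x)"

lemma lookup_move_unit:
  "lookup (move_unit u a b) x = lookup u x - of_bool (x = a) + of_bool (x = b)"
  by (auto simp: move_unit_def lookup_add lookup_minus lookup_single)

lemma keys_move_unit: "keys (move_unit u a b) \<subseteq> insert b (keys u)"
  by (auto simp: in_keys_iff lookup_move_unit)

lemma move_unit_self: "1 \<le> lookup u a \<Longrightarrow> move_unit u a a = u"
  by (rule poly_mapping_eqI) (simp add: lookup_move_unit)

lemma move_unit_move_unit:
  "1 \<le> lookup u a \<Longrightarrow> move_unit (move_unit u a b) b c = move_unit u a c"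
  by (rule poly_mapping_eqI) (auto simp: lookup_move_unit)

lemma move_unit_move_unit':
  "1 \<le> lookup u b \<Longrightarrow> 1 \<le> lookup u c \<Longrightarrow> c \<noteq> b \<Longrightarrow> move_unit (move_unit u b a) c b = move_unit u c a"
  by (rule poly_mapping_eqI) (auto simp: lookup_move_unit)

lemma move_unit_inverse: "1 \<le> lookup u a \<Longrightarrow> move_unit (move_unit u a b) b a = u"
  by (rule poly_mapping_eqI) (auto simp: lookup_move_unit)

lemma move_unit_add_move_unit:
  "1 \<le> lookup u a \<Longrightarrow> 1 \<le> lookup v b \<Longrightarrow> move_unit u a b + move_unit v b a = u + v"
  by (rule poly_mapping_eqI) (auto simp: lookup_add lookup_move_unit)

lemma deg_on_zero [simp]: "deg_on 0 A = 0"
  by (simp add: deg_on_def)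

lemma deg_on_add [simp]: "deg_on (u + v) A = deg_on u A + deg_on v A"
  by (simp add: deg_on_def lookup_add sum.distrib)

lemma lookup_le_deg_on: "finite A \<Longrightarrow> x \<in> A \<Longrightarrow> lookup u x \<le> deg_on u A"
  unfolding deg_on_def by (rule member_le_sum) auto

lemma deg_on_posD: "0 < deg_on u A \<Longrightarrow> \<exists>x\<in>A. 0 < lookup u x"
  unfolding deg_on_def by (metis sum.neutral gr_zeroI less_irrefl)

lemma deg_on_move_unit:
  assumes "1 \<le> lookup u a" "finite A"
  shows "deg_on (move_unit u a b) A + of_bool (a \<in> A) = deg_on u A + of_bool (b \<in> A)"
proof -
  have "deg_on (move_unit u a b) A + (\<Sum>x\<in>A. of_bool (x = a)) = deg_on u A + (\<Sum>x\<in>A. of_bool (x = b))"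
    using assms(1) by (simp add: deg_on_def lookup_move_unit sum.distrib[symmetric])
  then show ?thesis
    using assms(2) by (simp add: Int_insert_right split: if_splits)
qed

lemma deg_on_subset_diff: "finite S \<Longrightarrow> C \<subseteq> S \<Longrightarrow> deg_on u S = deg_on u C + deg_on u (S - C)"
  unfolding deg_on_def using sum.subset_diff[of C S "lookup u"] by simp

lemma deg_on_less_if_dominated:
  assumes "finite S" "C \<subseteq> S" "\<And>x. x \<in> S - C \<Longrightarrow> lookup v x \<le> lookup u x"
    "a \<in> S - C" "lookup v a < lookup u a" "deg_on v C \<le> deg_on u C"
  shows "deg_on v S < deg_on u S"
proof -
  have "(\<Sum>x\<in>S - C. lookup v x) < (\<Sum>x\<in>S - C. lookup u x)"
    using assms by (intro sum_strict_mono_ex1) auto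
  with assms(1,2,6) show ?thesis
    unfolding deg_on_def by (simp add: sum.subset_diff[of C S])
qed

lemma deg_on_sum_mset: "deg_on (sum_mset X) C = (\<Sum>x\<in>#X. deg_on x C)"
  by (induction X) simp_all

lemma mdeg_eq_deg_on: "finite S \<Longrightarrow> keys u \<subseteq> S \<Longrightarrow> mdeg u = deg_on u S"
  unfolding mdeg_def deg_on_def by (rule sum.mono_neutral_left) (auto simp: in_keys_iff)

lemma mdeg_add: "mdeg (u + v) = mdeg u + mdeg v"
proof -
  let ?S = "keys u \<union> keys v"
  have "keys (u + v) \<subseteq> ?S"
    by (rule keys_add)
  then show ?thesis
    by (simp add: mdeg_eq_deg_on[of ?S] deg_on_def lookup_add sum.distrib)
qed

lemma mdeg_eq_0_iff: "mdeg u = 0 \<longleftrightarrow> u = 0"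
  by (auto simp: mdeg_def in_keys_iff poly_mapping_eqI)

lemma mdeg_sum_mset: "(\<And>u. u \<in># X \<Longrightarrow> mdeg u = d) \<Longrightarrow> mdeg (sum_mset X) = d * size X"
  by (induction X) (auto simp: mdeg_add mdeg_def[of 0])

lemma mdeg_move_unit: "1 \<le> lookup u a \<Longrightarrow> mdeg (move_unit u a b) = mdeg u"
  using deg_on_move_unit[of u a "insert b (keys u)" b] keys_move_unit[of u a b]
  by (simp add: mdeg_eq_deg_on[of "insert b (keys u)"] in_keys_iff subset_insertI)

lemma mon_eq_if_le_mdeg_eq:
  assumes le: "\<And>x. lookup v x \<le> lookup u x" and deg: "mdeg v = mdeg u"
  shows "v = u"
proof (rule poly_mapping_eqI)
  fix x
  have "keys v \<subseteq> keys u"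
    using le by (metis in_keys_iff le_zero_eq subsetI)
  then have "deg_on v (keys u) = deg_on u (keys u)"
    using deg by (metis finite_keys mdeg_eq_deg_on order_refl)
  then show "lookup v x = lookup u x"
    using le[of x] by (cases "x \<in> keys u") (auto simp: deg_on_def in_keys_iff intro: sum_mono_inv le)
qed

lemma ex_lookup_less_if_mdeg_eq:
  assumes "mdeg u = mdeg w" "u \<noteq> w"
  obtains x where "lookup u x < lookup w x"
  using mon_eq_if_le_mdeg_eq[of w u] assms by (metis not_le)

lemma lookup_sum_mset: "lookup (\<Sum>e\<in>#M. f e) x = (\<Sum>e\<in>#M. lookup (f e) x)"
  by (induction M) (auto simp: lookup_add)

lemma lookup_sum_mset_pos: "0 < lookup (sum_mset Z) x \<Longrightarrow> \<exists>v\<in>#Z. 0 < lookup v x"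
  for Z :: "('a \<Rightarrow>\<^sub>0 nat) multiset"
  by (induction Z) (auto simp: lookup_add)

lemma lookup_sum_mset_replicate: "lookup (sum_mset (replicate_mset n w)) z = n * lookup w z"
  by (induction n) (auto simp: lookup_add)

lemma sum_mset_lower_bound: "(\<And>z. z \<in># Z \<Longrightarrow> c \<le> f z) \<Longrightarrow> c * size Z \<le> (\<Sum>z\<in>#Z. f z :: nat)"
  by (induction Z) (auto simp: add_mono)

definition deficit :: "('a \<Rightarrow>\<^sub>0 nat) \<Rightarrow> ('a \<Rightarrow>\<^sub>0 nat) \<Rightarrow> nat" where
  "deficit u w = (\<Sum>x\<in>keys w. lookup w x - lookup u x)"

lemma deficit_move_unit_less:
  assumes "lookup w a < lookup u a" "lookup u b < lookup w b"
  shows "deficit (move_unit u a b) w < deficit u w"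
  unfolding deficit_def
proof (rule sum_strict_mono_ex1)
  show "\<forall>x\<in>keys w. lookup w x - lookup (move_unit u a b) x \<le> lookup w x - lookup u x"
    using assms by (auto simp: lookup_move_unit)
  show "\<exists>x\<in>keys w. lookup w x - lookup (move_unit u a b) x < lookup w x - lookup u x"
    using assms by (intro bexI[of _ b]) (auto simp: lookup_move_unit in_keys_iff)
qed simp

section \<open>Symmetric exchanges\<close>

definition sym_exchange_property :: "('a \<Rightarrow>\<^sub>0 nat) set \<Rightarrow> bool" where
  "sym_exchange_property B \<longleftrightarrow> (\<forall>u\<in>B. \<forall>v\<in>B. \<forall>a. lookup v a < lookup u a \<longrightarrow>
     (\<exists>b. lookup u b < lookup v b \<and> move_unit u a b \<in> B \<and> move_unit v b a \<in> B))"

lemma polymatroidI: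
  assumes "finite B" "\<And>u v. u \<in> B \<Longrightarrow> v \<in> B \<Longrightarrow> mdeg u = mdeg v" "sym_exchange_property B"
  shows "polymatroid B"
  using assms unfolding polymatroid_def sym_exchange_property_def move_unit_def by blast

inductive sym_exchange_equiv ::
  "('a \<Rightarrow>\<^sub>0 nat) set \<Rightarrow> ('a \<Rightarrow>\<^sub>0 nat) multiset \<Rightarrow> ('a \<Rightarrow>\<^sub>0 nat) multiset \<Rightarrow> bool"
  for B where
  exchange: "\<lbrakk>u \<in> B; v \<in> B; lookup v a < lookup u a; lookup u b < lookup v b;
      move_unit u a b \<in> B; move_unit v b a \<in> B\<rbrakk>
    \<Longrightarrow> sym_exchange_equiv B {#u, v#} {#move_unit u a b, move_unit v b a#}"
| equiv_refl: "sym_exchange_equiv B X X"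
| equiv_sym: "sym_exchange_equiv B X Y \<Longrightarrow> sym_exchange_equiv B Y X"
| equiv_trans: "sym_exchange_equiv B X Y \<Longrightarrow> sym_exchange_equiv B Y Z \<Longrightarrow> sym_exchange_equiv B X Z"
| equiv_add: "sym_exchange_equiv B X Y \<Longrightarrow> set_mset Z \<subseteq> B \<Longrightarrow> sym_exchange_equiv B (X + Z) (Y + Z)"

lemma sym_exchange_equiv_invariants:
  assumes "sym_exchange_equiv B X Y"
  shows "sum_mset X = sum_mset Y" "size X = size Y" "set_mset X \<subseteq> B \<longleftrightarrow> set_mset Y \<subseteq> B"
  using assms by induction (auto simp: move_unit_add_move_unit)

text \<open>A swap that is not itself a symmetric exchange is routed through the exchange of u and v
  supplied by the symmetric exchange property.\<close>

lemma sym_exchange_equiv_swap_aux: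
  assumes sep: "sym_exchange_property B" and uv: "u \<in> B" "v \<in> B"
    and a: "lookup v a < lookup u a" and b: "lookup v b \<le> lookup u b" "1 \<le> lookup v b"
    and swapped: "move_unit u a b \<in> B" "move_unit v b a \<in> B"
  shows "sym_exchange_equiv B {#u, v#} {#move_unit u a b, move_unit v b a#}"
proof -
  obtain c where c: "lookup u c < lookup v c" "move_unit u a c \<in> B" "move_unit v c a \<in> B"
    using sep uv a unfolding sym_exchange_property_def by blast
  have "c \<noteq> a" "c \<noteq> b"
    using a b(1) c(1) by auto
  have "sym_exchange_equiv B {#u, v#} {#move_unit u a c, move_unit v c a#}"
    using uv a c by (rule exchange)
  moreover have "sym_exchange_equiv B {#move_unit u a b, move_unit v b a#}
      {#move_unit (move_unit u a b) b c, move_unit (move_unit v b a) c b#}"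
    using swapped a b c \<open>c \<noteq> a\<close> \<open>c \<noteq> b\<close>
    by (intro exchange) (auto simp: lookup_move_unit move_unit_move_unit move_unit_move_unit')
  moreover have "move_unit (move_unit u a b) b c = move_unit u a c"
    using a by (simp add: move_unit_move_unit)
  moreover have "move_unit (move_unit v b a) c b = move_unit v c a"
    using b(2) c(1) \<open>c \<noteq> b\<close> by (simp add: move_unit_move_unit')
  ultimately show ?thesis
    by (metis equiv_sym equiv_trans)
qed

lemma sym_exchange_equiv_swap:
  assumes sep: "sym_exchange_property B" and uv: "u \<in> B" "v \<in> B"
    and pos: "1 \<le> lookup u a" "1 \<le> lookup v b"
    and swapped: "move_unit u a b \<in> B" "move_unit v b a \<in> B"
  shows "sym_exchange_equiv B {#u, v#} {#move_unit u a b, move_unit v b a#}"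
proof (cases "a = b")
  case True
  then show ?thesis
    using pos by (simp add: move_unit_self equiv_refl)
next
  case False
  consider "lookup v a < lookup u a" "lookup u b < lookup v b"
    | "lookup v a < lookup u a" "lookup v b \<le> lookup u b"
    | "lookup u a \<le> lookup v a" "lookup u b < lookup v b"
    | "lookup u a \<le> lookup v a" "lookup v b \<le> lookup u b"
    by linarith
  then show ?thesis
  proof cases
    case 1
    with uv swapped show ?thesis
      by (intro exchange)
  next
    case 2
    then show ?thesis
      using sym_exchange_equiv_swap_aux[OF sep uv] pos swapped by blast
  next
    case 3
    then have "sym_exchange_equiv B {#v, u#} {#move_unit v b a, move_unit u a b#}"
      using sym_exchange_equiv_swap_aux[OF sep uv(2,1)] pos swapped by blast
    then show ?thesis
      by (simp add: add_mset_commute)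
  next
    case 4
    \<comment> \<open>the swap is the inverse of a symmetric exchange of the swapped pair\<close>
    have "sym_exchange_equiv B {#move_unit u a b, move_unit v b a#}
        {#move_unit (move_unit u a b) b a, move_unit (move_unit v b a) a b#}"
      using 4 False pos swapped uv by (intro exchange) (auto simp: lookup_move_unit move_unit_inverse)
    then show ?thesis
      using pos by (simp add: move_unit_inverse equiv_sym)
  qed
qed

lemma sym_exchange_equiv_swap_add:
  assumes "sym_exchange_property B" "u \<in> B" "v \<in> B" "1 \<le> lookup u a" "1 \<le> lookup v b"
    "move_unit u a b \<in> B" "move_unit v b a \<in> B" "set_mset Z \<subseteq> B"
  shows "sym_exchange_equiv B (add_mset u (add_mset v Z))
    (add_mset (move_unit u a b) (add_mset (move_unit v b a) Z))"
  using equiv_add[OF sym_exchange_equiv_swap[OF assms(1-7)] assms(8)] by simp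

context
  fixes B :: "('a \<Rightarrow>\<^sub>0 nat) set"
  assumes approach: "\<And>X Y u w. set_mset X \<subseteq> B \<Longrightarrow> set_mset Y \<subseteq> B \<Longrightarrow> w \<in> B \<Longrightarrow> u \<in># X \<Longrightarrow>
      u \<noteq> w \<Longrightarrow> sum_mset X = w + sum_mset Y \<Longrightarrow>
      \<exists>X' u'. sym_exchange_equiv B X X' \<and> u' \<in># X' \<and> deficit u' w < deficit u w"
begin

lemma sym_exchange_equiv_extract:
  assumes "set_mset X \<subseteq> B" "set_mset Y \<subseteq> B" "w \<in> B" "u \<in># X" "sum_mset X = w + sum_mset Y"
  shows "\<exists>X'. sym_exchange_equiv B X (add_mset w X')"
  using assms
proof (induction "deficit u w" arbitrary: X u rule: less_induct)
  case less
  show ?case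
  proof (cases "u = w")
    case True
    then have "X = add_mset w (X - {#w#})"
      using less.prems(4) by simp
    then show ?thesis
      by (metis equiv_refl)
  next
    case False
    then obtain X1 u1 where X1: "sym_exchange_equiv B X X1" "u1 \<in># X1" "deficit u1 w < deficit u w"
      using approach less.prems by blast
    have "set_mset X1 \<subseteq> B" "sum_mset X1 = w + sum_mset Y"
      using sym_exchange_equiv_invariants[OF X1(1)] less.prems by auto
    then have "\<exists>X'. sym_exchange_equiv B X1 (add_mset w X')"
      using less.hyps[OF X1(3)] X1(2) less.prems(2,3) by blast
    then show ?thesis
      using X1(1) equiv_trans by blast
  qed
qed

lemma sym_exchange_equiv_if_approach:
  assumes deg: "\<And>u. u \<in> B \<Longrightarrow> mdeg u = d" and "0 < d"
    and "set_mset X \<subseteq> B" "set_mset Y \<subseteq> B" "sum_mset X = sum_mset Y"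
  shows "sym_exchange_equiv B X Y"
  using assms(3-)
proof (induction "size X" arbitrary: X Y)
  case 0
  then have "size Y = 0"
    using mdeg_sum_mset[of X d] mdeg_sum_mset[of Y d] deg \<open>0 < d\<close> by auto
  then show ?case
    using 0 by (simp add: equiv_refl)
next
  case (Suc n)
  have "d * size Y = d * size X"
    using mdeg_sum_mset[of X d] mdeg_sum_mset[of Y d] deg Suc.prems by (metis subsetD)
  then obtain w Y' where Y: "Y = add_mset w Y'"
    using Suc.hyps(2) \<open>0 < d\<close> by (metis mult_left_cancel not_less_zero size_eq_Suc_imp_eq_union)
  obtain u where "u \<in># X"
    using Suc.hyps(2) by (metis size_eq_Suc_imp_eq_union union_single_eq_member)
  then obtain X' where X': "sym_exchange_equiv B X (add_mset w X')"
    using sym_exchange_equiv_extract[of X Y' w u] Suc.prems Y by auto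
  then have "set_mset X' \<subseteq> B" "sum_mset X' = sum_mset Y'" "size X' = n"
    using sym_exchange_equiv_invariants[OF X'] Suc Y by auto
  then have "sym_exchange_equiv B X' Y'"
    using Suc.hyps(1) Suc.prems(2) Y by simp
  then have "sym_exchange_equiv B (X' + {#w#}) (Y' + {#w#})"
    using Suc.prems(2) Y by (intro equiv_add) auto
  then show ?case
    using X' Y equiv_trans by fastforce
qed

end

section \<open>Toric ideals\<close>

text \<open>A multiset X of elements of B stands for the monomial of T that is the product of the
  variables z_w, w in X; its image under toric_map is the monomial sum_mset X of S.\<close>

definition mon_of :: "'b multiset \<Rightarrow> 'b \<Rightarrow>\<^sub>0 nat" where
  "mon_of X = (\<Sum>w\<in>#X. single w 1)"

lemma lookup_mon_of [simp]: "lookup (mon_of X) = count X"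
  by (induction X) (auto simp: mon_of_def lookup_add lookup_single)

lemma keys_mon_of [simp]: "keys (mon_of X) = set_mset X"
  by (auto simp: in_keys_iff)

lemma mon_of_union [simp]: "mon_of (X + Y) = mon_of X + mon_of Y"
  by (simp add: mon_of_def)

lemma ex_mon_of: "\<exists>X. \<alpha> = mon_of X"
proof
  have "finite {x. 0 < lookup \<alpha> x}"
    using finite_keys[of \<alpha>] by (simp add: in_keys_iff flip: neq0_conv)
  then show "\<alpha> = mon_of (Abs_multiset (lookup \<alpha>))"
    by (intro poly_mapping_eqI) simp
qed

lemma zmon_eq: "zmon u v = single (mon_of {#u, v#}) 1"
  by (simp add: zmon_def mon_of_def)

lemma prod_mset_single:
  "prod_mset (image_mset (\<lambda>w. single w 1) X) = (single (sum_mset X) 1 :: _ \<Rightarrow>\<^sub>0 'k::comm_semiring_1)"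
  by (induction X) (simp_all add: mult_single)

lemma toric_map_single_mon_of:
  "toric_map (single (mon_of X) c :: _ \<Rightarrow>\<^sub>0 'k::field) = single (sum_mset X) c"
proof (cases "c = 0")
  case False
  have "(\<Prod>w\<in>set_mset X. single w (1::'k) ^ count X w) = single (sum_mset X) 1"
    by (simp flip: image_prod_mset_multiplicity add: prod_mset_single)
  then show ?thesis
    using False by (simp add: toric_map_def mult_single)
qed (simp add: toric_map_def)

lemma toric_map_add: "toric_map (p + q) = toric_map p + toric_map q"
  unfolding toric_map_def by (rule setsum_keys_plus_distrib) (simp_all add: single_add distrib_right)

lemma toric_map_zero [simp]: "toric_map 0 = 0"
  by (simp add: toric_map_def)

lemma toric_map_diff: "toric_map (p - q) = toric_map p - toric_map q"
  using toric_map_add[of "p - q" q] by (simp add: eq_diff_eq)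

lemma toric_map_sum: "toric_map (\<Sum>i\<in>I. f i) = (\<Sum>i\<in>I. toric_map (f i))"
  by (induction I rule: infinite_finite_induct) (simp_all add: toric_map_add)

lemma poly_mapping_monomial_expansion: "p = (\<Sum>\<alpha>\<in>keys p. single \<alpha> (lookup p \<alpha>))"
  by (rule poly_mapping_eqI) (simp add: lookup_sum lookup_single when_def in_keys_iff)

lemma toric_map_mult:
  fixes p q :: "(('a \<Rightarrow>\<^sub>0 nat) \<Rightarrow>\<^sub>0 nat) \<Rightarrow>\<^sub>0 'k::field"
  shows "toric_map (p * q) = toric_map p * toric_map q"
proof -
  have single: "toric_map (single \<alpha> a * single \<beta> b) = toric_map (single \<alpha> a) * toric_map (single \<beta> b)"
    for \<alpha> \<beta> :: "('a \<Rightarrow>\<^sub>0 nat) \<Rightarrow>\<^sub>0 nat" and a b :: 'k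
  proof -
    obtain X Y where "\<alpha> = mon_of X" "\<beta> = mon_of Y"
      using ex_mon_of by metis
    then show ?thesis
      by (simp add: mult_single toric_map_single_mon_of flip: mon_of_union)
  qed
  have "toric_map (p * q)
      = toric_map ((\<Sum>\<alpha>\<in>keys p. single \<alpha> (lookup p \<alpha>)) * (\<Sum>\<beta>\<in>keys q. single \<beta> (lookup q \<beta>)))"
    by (simp flip: poly_mapping_monomial_expansion)
  also have "\<dots> = (\<Sum>\<alpha>\<in>keys p. toric_map (single \<alpha> (lookup p \<alpha>)))
      * (\<Sum>\<beta>\<in>keys q. toric_map (single \<beta> (lookup q \<beta>)))"
    by (simp add: sum_product toric_map_sum single)
  also have "\<dots> = toric_map p * toric_map q"
    by (simp flip: toric_map_sum poly_mapping_monomial_expansion)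
  finally show ?thesis .
qed

lemma ideal_gen_zero: "0 \<in> ideal_gen R F"
  unfolding ideal_gen_def by (intro CollectI exI[of _ "[]"]) simp

lemma ideal_gen_generator: "1 \<in> R \<Longrightarrow> f \<in> F \<Longrightarrow> f \<in> ideal_gen R F"
  unfolding ideal_gen_def by (intro CollectI exI[of _ "[1]"] exI[of _ "[f]"]) simp

lemma ideal_gen_add:
  assumes "x \<in> ideal_gen R F" "y \<in> ideal_gen R F"
  shows "x + y \<in> ideal_gen R F"
proof -
  obtain cs fs ds gs where
    "x = sum_list (map2 (*) cs fs)" "length cs = length fs" "set cs \<subseteq> R" "set fs \<subseteq> F"
    "y = sum_list (map2 (*) ds gs)" "length ds = length gs" "set ds \<subseteq> R" "set gs \<subseteq> F"
    using assms unfolding ideal_gen_def by blast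
  then show ?thesis
    unfolding ideal_gen_def by (intro CollectI exI[of _ "cs @ ds"] exI[of _ "fs @ gs"]) auto
qed

lemma ideal_gen_mult:
  assumes closed: "\<And>a b. a \<in> R \<Longrightarrow> b \<in> R \<Longrightarrow> a * b \<in> R" and "r \<in> R" "x \<in> ideal_gen R F"
  shows "r * x \<in> ideal_gen R F"
proof -
  obtain cs fs where x: "x = sum_list (map2 (*) cs fs)" "length cs = length fs" "set cs \<subseteq> R" "set fs \<subseteq> F"
    using assms(3) unfolding ideal_gen_def by blast
  have "r * x = sum_list (map2 (*) (map ((*) r) cs) fs)"
    unfolding x(1) using x(2) by (induction cs fs rule: list_induct2) (simp_all add: algebra_simps)
  then show ?thesis
    using x(2-4) closed \<open>r \<in> R\<close> unfolding ideal_gen_def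
    by (intro CollectI exI[of _ "map ((*) r) cs"] exI[of _ fs]) auto
qed

lemma ideal_gen_induct [consumes 1, case_names zero add mult]:
  assumes "x \<in> ideal_gen R F" "P 0" "\<And>a b. P a \<Longrightarrow> P b \<Longrightarrow> P (a + b)"
    "\<And>c f. c \<in> R \<Longrightarrow> f \<in> F \<Longrightarrow> P (c * f)"
  shows "P x"
proof -
  obtain cs fs where x: "x = sum_list (map2 (*) cs fs)" "length cs = length fs" "set cs \<subseteq> R" "set fs \<subseteq> F"
    using assms(1) unfolding ideal_gen_def by blast
  from x(2-4) have "P (sum_list (map2 (*) cs fs))"
    by (induction cs fs rule: list_induct2) (auto intro: assms(2-4))
  then show ?thesis
    using x(1) by simp
qed

lemma T_ring_add: "p \<in> T_ring B \<Longrightarrow> q \<in> T_ring B \<Longrightarrow> p + q \<in> T_ring B"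
  using keys_add[of p q] unfolding T_ring_def by blast

lemma T_ring_diff:
  assumes "p \<in> T_ring B" "q \<in> T_ring B"
  shows "p - q \<in> T_ring B"
proof -
  have "keys (p - q) \<subseteq> keys p \<union> keys q"
    by (auto simp: in_keys_iff lookup_minus)
  then show ?thesis
    using assms unfolding T_ring_def by blast
qed

lemma T_ring_mult:
  assumes "p \<in> T_ring B" "q \<in> T_ring B"
  shows "p * q \<in> T_ring B"
  unfolding T_ring_def mem_Collect_eq
proof
  fix \<gamma> assume "\<gamma> \<in> keys (p * q)"
  then obtain \<alpha> \<beta> where "\<gamma> = \<alpha> + \<beta>" "\<alpha> \<in> keys p" "\<beta> \<in> keys q"
    using keys_mult[of p q] by blast
  then show "keys \<gamma> \<subseteq> B"
    using assms keys_add[of \<alpha> \<beta>] unfolding T_ring_def by blast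
qed

lemma single_in_T_ring: "keys \<alpha> \<subseteq> B \<Longrightarrow> single \<alpha> c \<in> T_ring B"
  by (simp add: T_ring_def)

lemma one_in_T_ring: "1 \<in> T_ring B"
  using single_in_T_ring[of 0 B 1] by simp

lemma T_ring_keys_subset: "p \<in> T_ring B \<Longrightarrow> keys q \<subseteq> keys p \<Longrightarrow> q \<in> T_ring B"
  unfolding T_ring_def by blast

lemma ideal_gen_T_ring_mult:
  "c \<in> T_ring B \<Longrightarrow> x \<in> ideal_gen (T_ring B) F \<Longrightarrow> c * x \<in> ideal_gen (T_ring B) F"
  by (rule ideal_gen_mult[OF T_ring_mult])

lemma sym_exchange_binomials_subset_toric_ideal:
  "(sym_exchange_binomials B :: (_ \<Rightarrow>\<^sub>0 'k::field) set) \<subseteq> toric_ideal B"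
proof
  fix f :: "_ \<Rightarrow>\<^sub>0 'k" assume "f \<in> sym_exchange_binomials B"
  then obtain u v a b where f: "f = zmon u v - zmon (move_unit u a b) (move_unit v b a)"
    and B: "u \<in> B" "v \<in> B" "move_unit u a b \<in> B" "move_unit v b a \<in> B"
    and ab: "lookup v a < lookup u a" "lookup u b < lookup v b"
    unfolding sym_exchange_binomials_def move_unit_def by blast
  have "f \<in> T_ring B"
    unfolding f zmon_eq using B by (intro T_ring_diff single_in_T_ring) simp_all
  moreover have "toric_map f = 0"
    using ab
    by (simp add: f zmon_eq toric_map_diff toric_map_single_mon_of move_unit_add_move_unit add.commute)
  ultimately show "f \<in> toric_ideal B"
    by (simp add: toric_ideal_def)
qed

lemma ideal_gen_sym_exchange_subset_toric_ideal:
  "ideal_gen (T_ring B) (sym_exchange_binomials B) \<subseteq> (toric_ideal B :: (_ \<Rightarrow>\<^sub>0 'k::field) set)"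
proof
  fix x :: "_ \<Rightarrow>\<^sub>0 'k" assume "x \<in> ideal_gen (T_ring B) (sym_exchange_binomials B)"
  then show "x \<in> toric_ideal B"
  proof (induction rule: ideal_gen_induct)
    case zero
    then show ?case
      by (simp add: toric_ideal_def T_ring_def)
  next
    case (add a b)
    then show ?case
      by (simp add: toric_ideal_def T_ring_add toric_map_add)
  next
    case (mult c f)
    then have "f \<in> toric_ideal B"
      using sym_exchange_binomials_subset_toric_ideal by blast
    with mult.hyps(1) show ?case
      by (simp add: toric_ideal_def T_ring_mult toric_map_mult)
  qed
qed

lemma sym_exchange_equiv_binomial_mem:
  assumes "sym_exchange_equiv B X Y"
  shows "single (mon_of X) 1 - single (mon_of Y) 1
    \<in> (ideal_gen (T_ring B) (sym_exchange_binomials B) :: (_ \<Rightarrow>\<^sub>0 'k::field) set)"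
  using assms
proof induction
  case (exchange u v a b)
  then have "zmon u v - zmon (move_unit u a b) (move_unit v b a)
      \<in> (sym_exchange_binomials B :: (_ \<Rightarrow>\<^sub>0 'k) set)"
    unfolding sym_exchange_binomials_def move_unit_def by blast
  then show ?case
    unfolding zmon_eq by (rule ideal_gen_generator[OF one_in_T_ring])
next
  case equiv_refl
  then show ?case
    by (simp add: ideal_gen_zero)
next
  case (equiv_sym X Y)
  have "single (mon_of Y) 1 - single (mon_of X) 1
      = (single 0 (-1) :: _ \<Rightarrow>\<^sub>0 'k) * (single (mon_of X) 1 - single (mon_of Y) 1)"
    by (simp add: single_uminus)
  then show ?case
    using equiv_sym.IH by (simp add: ideal_gen_T_ring_mult single_in_T_ring)
next
  case (equiv_trans X Y Z)
  then show ?case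
    using ideal_gen_add by fastforce
next
  case (equiv_add X Y Z)
  have "single (mon_of (X + Z)) 1 - single (mon_of (Y + Z)) 1
      = (single (mon_of Z) 1 :: _ \<Rightarrow>\<^sub>0 'k) * (single (mon_of X) 1 - single (mon_of Y) 1)"
    by (simp add: mult_single algebra_simps)
  then show ?case
    using equiv_add by (simp add: ideal_gen_T_ring_mult single_in_T_ring)
qed

lemma toric_map_coeff_cancelled:
  assumes "toric_map p = 0" "mon_of X \<in> keys p"
  shows "\<exists>Y. mon_of Y \<in> keys p \<and> mon_of Y \<noteq> mon_of X \<and> sum_mset Y = sum_mset X"
proof (rule ccontr)
  assume none: "\<not> ?thesis"
  have other: "sum_mset Y \<noteq> sum_mset X" if "mon_of Y \<in> keys p" "mon_of Y \<noteq> mon_of X" for Y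
    using that none by auto
  have rest: "(\<Sum>\<beta>\<in>keys p - {mon_of X}. lookup (toric_map (single \<beta> (lookup p \<beta>))) (sum_mset X)) = 0"
  proof (rule sum.neutral, rule ballI)
    fix \<beta> assume \<beta>: "\<beta> \<in> keys p - {mon_of X}"
    obtain Y where "\<beta> = mon_of Y"
      using ex_mon_of by blast
    then show "lookup (toric_map (single \<beta> (lookup p \<beta>))) (sum_mset X) = 0"
      using other \<beta> by (simp add: toric_map_single_mon_of lookup_single)
  qed
  have "toric_map p = (\<Sum>\<beta>\<in>keys p. toric_map (single \<beta> (lookup p \<beta>)))"
    by (subst poly_mapping_monomial_expansion) (simp add: toric_map_sum)
  then have "lookup (toric_map p) (sum_mset X) = lookup p (mon_of X)"
    using rest
      sum.remove[OF finite_keys assms(2), of "\<lambda>\<beta>. lookup (toric_map (single \<beta> (lookup p \<beta>))) (sum_mset X)"]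
    by (simp add: lookup_sum toric_map_single_mon_of)
  then show False
    using assms by (simp add: in_keys_iff)
qed

lemma toric_ideal_subset_ideal_gen:
  assumes binomial: "\<And>X Y. set_mset X \<subseteq> B \<Longrightarrow> set_mset Y \<subseteq> B \<Longrightarrow> sum_mset X = sum_mset Y \<Longrightarrow>
      single (mon_of X) 1 - single (mon_of Y) 1 \<in> ideal_gen (T_ring B) F"
  shows "toric_ideal B \<subseteq> (ideal_gen (T_ring B) F :: (_ \<Rightarrow>\<^sub>0 'k::field) set)"
proof
  fix p :: "_ \<Rightarrow>\<^sub>0 'k" assume "p \<in> toric_ideal B"
  then show "p \<in> ideal_gen (T_ring B) F"
  proof (induction "card (keys p)" arbitrary: p rule: less_induct)
    case less
    then have p: "p \<in> T_ring B" "toric_map p = 0"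
      by (auto simp: toric_ideal_def)
    show ?case
    proof (cases "p = 0")
      case True
      then show ?thesis
        by (simp add: ideal_gen_zero)
    next
      case False
      then obtain X where X: "mon_of X \<in> keys p"
        using ex_mon_of by (metis all_not_in_conv keys_eq_empty)
      then obtain Y where Y: "mon_of Y \<in> keys p" "mon_of Y \<noteq> mon_of X" "sum_mset Y = sum_mset X"
        using toric_map_coeff_cancelled[OF p(2)] by blast
      define c where "c = lookup p (mon_of X)"
      define p' where "p' = p - single (mon_of X) c + single (mon_of Y) c"
      have keys_p': "keys p' \<subseteq> keys p - {mon_of X}"
        using Y(1,2)
        by (auto simp: p'_def c_def in_keys_iff lookup_add lookup_minus lookup_single when_def split: if_splits)
      have "keys (mon_of X) \<subseteq> B" "keys (mon_of Y) \<subseteq> B"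
        using p(1) X Y(1) unfolding T_ring_def by blast+
      then have "single (mon_of X) 1 - single (mon_of Y) 1 \<in> ideal_gen (T_ring B) F"
        using Y(3) by (intro binomial) simp_all
      then have binomial_c:
          "single 0 c * (single (mon_of X) 1 - single (mon_of Y) 1) \<in> ideal_gen (T_ring B) F"
        by (intro ideal_gen_T_ring_mult single_in_T_ring) simp_all
      have "card (keys p') < card (keys p)"
        using keys_p' X by (meson finite_keys card_Diff1_less card_mono finite_Diff le_less_trans)
      moreover have "p' \<in> toric_ideal B"
        using keys_p' p Y(3) T_ring_keys_subset[OF p(1)]
        by (auto simp: toric_ideal_def p'_def toric_map_add toric_map_diff toric_map_single_mon_of)
      ultimately have "p' \<in> ideal_gen (T_ring B) F"
        by (rule less.hyps)
      then have "p' + single 0 c * (single (mon_of X) 1 - single (mon_of Y) 1) \<in> ideal_gen (T_ring B) F"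
        using binomial_c by (rule ideal_gen_add)
      moreover have "p' + single 0 c * (single (mon_of X) 1 - single (mon_of Y) 1) = p"
        by (simp add: p'_def right_diff_distrib mult_single)
      ultimately show ?thesis
        by simp
    qed
  qed
qed

lemma toric_ideal_eq_sym_exchange_ideal:
  assumes "\<And>X Y. set_mset X \<subseteq> B \<Longrightarrow> set_mset Y \<subseteq> B \<Longrightarrow> sum_mset X = sum_mset Y \<Longrightarrow>
      sym_exchange_equiv B X Y"
  shows "(toric_ideal B :: (_ \<Rightarrow>\<^sub>0 'k::field) set) = ideal_gen (T_ring B) (sym_exchange_binomials B)"
  using toric_ideal_subset_ideal_gen[OF sym_exchange_equiv_binomial_mem[OF assms]]
    ideal_gen_sym_exchange_subset_toric_ideal by blast

section \<open>Powers of edge ideals\<close>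

lemma simple_graph_edgeD:
  "simple_graph V E \<Longrightarrow> {x, y} \<in> E \<Longrightarrow> x \<noteq> y \<and> x \<in> V \<and> y \<in> V"
  unfolding simple_graph_def by (metis doubleton_eq_iff)

lemma lookup_edge_mon: "finite e \<Longrightarrow> lookup (edge_mon e) z = of_bool (z \<in> e)"
  by (simp add: edge_mon_def lookup_sum lookup_single when_def)

lemma mdeg_edge_mon: "finite e \<Longrightarrow> mdeg (edge_mon e) = card e"
proof -
  assume "finite e"
  then have "keys (edge_mon e) = e"
    by (auto simp: in_keys_iff lookup_edge_mon)
  with \<open>finite e\<close> show ?thesis
    by (simp add: mdeg_def lookup_edge_mon)
qed

lemma deg_on_edge_mon: "finite e \<Longrightarrow> finite C \<Longrightarrow> deg_on (edge_mon e) C = card (C \<inter> e)"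
  by (simp add: deg_on_def lookup_edge_mon)

lemma pow_gensE:
  assumes "simple_graph V E" "u \<in> pow_gens E q"
  obtains M where "u = (\<Sum>e\<in>#M. edge_mon e)" "size M = q"
    "\<And>e. e \<in># M \<Longrightarrow> \<exists>x y. x \<noteq> y \<and> x \<in> V \<and> y \<in> V \<and> e = {x, y}"
  using assms unfolding pow_gens_def simple_graph_def by blast

lemma pow_gens_simple_graph:
  assumes "simple_graph V E" "u \<in> pow_gens E q"
  shows "keys u \<subseteq> V" "mdeg u = 2 * q"
proof -
  obtain M where M: "u = (\<Sum>e\<in>#M. edge_mon e)" "size M = q"
    and edges: "\<And>e. e \<in># M \<Longrightarrow> \<exists>x y. x \<noteq> y \<and> x \<in> V \<and> y \<in> V \<and> e = {x, y}"
    using pow_gensE[OF assms] by blast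
  show "keys u \<subseteq> V"
  proof
    fix z assume "z \<in> keys u"
    then obtain e where "e \<in># M" and z: "lookup (edge_mon e) z \<noteq> 0"
      by (auto simp: M(1) in_keys_iff lookup_sum_mset)
    then obtain x y where "x \<in> V" "y \<in> V" "e = {x, y}"
      using edges by blast
    with z show "z \<in> V"
      by (auto simp: lookup_edge_mon)
  qed
  have "mdeg (edge_mon e) = 2" if "e \<in># M" for e
    using edges[OF that] by (auto simp: mdeg_edge_mon)
  then show "mdeg u = 2 * q"
    using mdeg_sum_mset[of "image_mset edge_mon M" 2] M by auto
qed

lemma min_gens_eq_pow_gens: "simple_graph V E \<Longrightarrow> min_gens E q = pow_gens E q"
  unfolding min_gens_def mon_dvd_def
  using mon_eq_if_le_mdeg_eq pow_gens_simple_graph(2) by fastforce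

lemma finite_pow_gens:
  assumes "simple_graph V E"
  shows "finite (pow_gens E q)"
proof -
  have "E \<subseteq> Pow V"
  proof
    fix e assume "e \<in> E"
    then obtain x y where "x \<in> V" "y \<in> V" "e = {x, y}"
      using assms unfolding simple_graph_def by blast
    then show "e \<in> Pow V"
      by simp
  qed
  then have "finite E"
    using assms finite_subset[of E "Pow V"] by (simp add: simple_graph_def)
  moreover have "pow_gens E q = (\<lambda>M. \<Sum>e\<in>#M. edge_mon e) ` multisets_of_size E q"
    by (auto simp: pow_gens_def multisets_of_size_def)
  ultimately show ?thesis
    by (simp add: finite_multisets_of_size)
qed

lemma pow_gens_neighbour:
  assumes "simple_graph V E" "u \<in> pow_gens E q" "0 < lookup u z"
  obtains t where "{z, t} \<in> E" "0 < lookup u t"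
proof -
  obtain M where M: "u = (\<Sum>e\<in>#M. edge_mon e)" "set_mset M \<subseteq> E"
    using assms(2) unfolding pow_gens_def by blast
  then have edge: "\<exists>x y. x \<noteq> y \<and> e = {x, y}" if "e \<in># M" for e
    using assms(1) that unfolding simple_graph_def by blast
  obtain e where e: "e \<in># M" "lookup (edge_mon e) z \<noteq> 0"
    using assms(3) by (auto simp: M(1) lookup_sum_mset simp flip: neq0_conv)
  obtain x y where "x \<noteq> y" "e = {x, y}"
    using edge[OF e(1)] by blast
  with e(2) obtain t where t: "e = {z, t}"
    by (auto simp: lookup_edge_mon)
  have "u = edge_mon e + (\<Sum>e\<in>#M - {#e#}. edge_mon e)"
    using e(1) M(1) by (metis insert_DiffM sum_mset.insert)
  then have "lookup (edge_mon e) t \<le> lookup u t"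
    by (simp add: lookup_add)
  then have "0 < lookup u t"
    using edge[OF e(1)] t by (auto simp: lookup_edge_mon)
  then show ?thesis
    using that t e(1) M(2) by blast
qed

text \<open>With zw an edge, exchanging w out of zw(xy)^(q-1) towards (xy)^q must bring in x or y,
  and the resulting generator has no neighbour of z in its support.\<close>

lemma pow_gens_not_polymatroid:
  assumes sg: "simple_graph V E" and ni: "no_isolated V E" and "1 \<le> q"
    and xy: "{x, y} \<in> E" and z: "z \<in> V" "{x, z} \<notin> E" "{y, z} \<notin> E"
  shows "\<not> polymatroid (pow_gens E q)"
proof
  assume pm: "polymatroid (pow_gens E q)"
  obtain e where "e \<in> E" "z \<in> e"
    using ni z(1) unfolding no_isolated_def by blast
  moreover obtain a b where "e = {a, b}"
    using sg \<open>e \<in> E\<close> unfolding simple_graph_def by blast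
  ultimately obtain w where zw: "{z, w} \<in> E"
    by (metis insert_commute insertE singletonD)
  have "z \<noteq> x" "z \<noteq> y" "w \<noteq> x" "w \<noteq> y"
    using xy z zw by (auto simp: insert_commute)
  then have neq: "x \<noteq> y" "z \<noteq> x" "z \<noteq> y" "w \<noteq> z" "w \<noteq> x" "w \<noteq> y"
    using simple_graph_edgeD[OF sg xy] simple_graph_edgeD[OF sg zw] by auto
  define u where "u = (\<Sum>e\<in>#add_mset {z, w} (replicate_mset (q - 1) {x, y}). edge_mon e)"
  define v where "v = (\<Sum>e\<in>#replicate_mset q {x, y}. edge_mon e)"
  have "u \<in> pow_gens E q"
    unfolding u_def pow_gens_def using zw xy \<open>1 \<le> q\<close>
    by (intro CollectI exI[of _ "add_mset {z, w} (replicate_mset (q - 1) {x, y})"]) auto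
  have "v \<in> pow_gens E q"
    unfolding v_def pow_gens_def using xy by (intro CollectI exI[of _ "replicate_mset q {x, y}"]) auto
  have lookup_u: "lookup u t = of_bool (t \<in> {z, w}) + (q - 1) * of_bool (t \<in> {x, y})" for t
    by (simp add: u_def lookup_add lookup_sum_mset_replicate lookup_edge_mon del: insert_iff)
  have lookup_v: "lookup v t = q * of_bool (t \<in> {x, y})" for t
    by (simp add: v_def lookup_sum_mset_replicate lookup_edge_mon del: insert_iff)
  have "lookup v w < lookup u w"
    using lookup_u lookup_v neq by simp
  then obtain \<rho> where \<rho>: "lookup u \<rho> < lookup v \<rho>" "move_unit u w \<rho> \<in> pow_gens E q"
    using pm \<open>u \<in> pow_gens E q\<close> \<open>v \<in> pow_gens E q\<close> unfolding polymatroid_def move_unit_def by blast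
  have "\<rho> \<in> {x, y}"
    using \<rho>(1) lookup_v[of \<rho>] by (cases "\<rho> \<in> {x, y}") auto
  then have support: "lookup (move_unit u w \<rho>) t = 0" if "t \<notin> {x, y, z}" for t
    using that neq by (auto simp: lookup_move_unit lookup_u)
  have "0 < lookup (move_unit u w \<rho>) z"
    using \<open>\<rho> \<in> {x, y}\<close> neq by (auto simp: lookup_move_unit lookup_u)
  then obtain t where t: "{z, t} \<in> E" "0 < lookup (move_unit u w \<rho>) t"
    using pow_gens_neighbour[OF sg \<rho>(2)] by blast
  then have "t \<notin> {x, y, z}"
    using z simple_graph_edgeD[OF sg t(1)] by (auto simp: insert_commute)
  then show False
    using support t(2) by simp
qed

definition multipartite_edges :: "'a set set \<Rightarrow> 'a set set" where
  "multipartite_edges P = {{x, y} | x y. \<exists>A\<in>P. \<exists>B\<in>P. A \<noteq> B \<and> x \<in> A \<and> y \<in> B}"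

lemma multipartite_edgesI:
  "A \<in> P \<Longrightarrow> B \<in> P \<Longrightarrow> A \<noteq> B \<Longrightarrow> x \<in> A \<Longrightarrow> y \<in> B \<Longrightarrow> {x, y} \<in> multipartite_edges P"
  unfolding multipartite_edges_def by blast

lemma complete_multipartite_iff:
  "complete_multipartite V E \<longleftrightarrow>
    (\<exists>P. partition_on V P \<and> finite P \<and> 2 \<le> card P \<and> E = multipartite_edges P)"
  unfolding complete_multipartite_def partition_on_def disjoint_def multipartite_edges_def by blast

text \<open>The hypothesis makes non-adjacency an equivalence relation on V; its classes are the parts.\<close>

lemma complete_multipartiteI:
  assumes sg: "simple_graph V E" and ni: "no_isolated V E" and "V \<noteq> {}"
    and adjacent_end: "\<And>x y z. {x, y} \<in> E \<Longrightarrow> z \<in> V \<Longrightarrow> {x, z} \<in> E \<or> {y, z} \<in> E"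
  shows "complete_multipartite V E"
proof -
  define r where "r = {(a, b). a \<in> V \<and> b \<in> V \<and> {a, b} \<notin> E}"
  have no_loop: "{x} \<notin> E" for x
    using simple_graph_edgeD[OF sg, of x x] by auto
  have "equiv V r"
  proof (rule equivI)
    show "refl_on V r"
      using no_loop by (auto simp: r_def refl_on_def)
    show "sym r"
      by (auto simp: r_def sym_def insert_commute)
    show "trans r"
    proof (rule transI)
      fix a b c assume "(a, b) \<in> r" "(b, c) \<in> r"
      then show "(a, c) \<in> r"
        using adjacent_end[of a c b] by (auto simp: r_def insert_commute)
    qed
  qed (auto simp: r_def)
  define P where "P = V // r"
  have partition: "partition_on V P"
    unfolding P_def using \<open>equiv V r\<close> by (rule partition_on_quotient)
  have same_part: "A = B \<longleftrightarrow> {x, y} \<notin> E" if "A \<in> P" "B \<in> P" "x \<in> A" "y \<in> B" for A B x y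
  proof -
    have "A = B \<longleftrightarrow> (x, y) \<in> r"
      using quotient_eq_iff[OF \<open>equiv V r\<close>] that unfolding P_def by blast
    moreover have "x \<in> V" "y \<in> V"
      using partition that by (auto dest: partition_onD1)
    ultimately show ?thesis
      by (simp add: r_def)
  qed
  have "finite P"
    using finite_quotient[OF _ equiv_type[OF \<open>equiv V r\<close>]] sg by (simp add: P_def simple_graph_def)
  have edges: "E = multipartite_edges P"
  proof
    show "E \<subseteq> multipartite_edges P"
    proof
      fix e assume "e \<in> E"
      then obtain x y where "x \<in> V" "y \<in> V" and e: "e = {x, y}"
        using sg unfolding simple_graph_def by blast
      then obtain A B where AB: "A \<in> P" "B \<in> P" "x \<in> A" "y \<in> B"
        using partition by (metis UnionE partition_onD1)
      then have "A \<noteq> B"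
        using same_part[OF AB] \<open>e \<in> E\<close> e by simp
      with AB e show "e \<in> multipartite_edges P"
        unfolding multipartite_edges_def by blast
    qed
    show "multipartite_edges P \<subseteq> E"
    proof
      fix e assume "e \<in> multipartite_edges P"
      then obtain x y A B where "A \<in> P" "B \<in> P" "A \<noteq> B" "x \<in> A" "y \<in> B" "e = {x, y}"
        unfolding multipartite_edges_def by blast
      then show "e \<in> E"
        using same_part[of A B x y] by simp
    qed
  qed
  obtain e where "e \<in> E"
    using ni \<open>V \<noteq> {}\<close> unfolding no_isolated_def by blast
  then obtain A B where "A \<in> P" "B \<in> P" "A \<noteq> B"
    unfolding edges multipartite_edges_def by blast
  then have "2 \<le> card P"
    using \<open>finite P\<close> by (metis card_2_iff card_mono empty_subsetI insert_subset)
  then show ?thesis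
    using partition \<open>finite P\<close> edges unfolding complete_multipartite_iff by blast
qed

section \<open>Complete multipartite graphs\<close>

lemma obtain_max_on_finite:
  fixes f :: "'b \<Rightarrow> nat"
  assumes "finite S" "S \<noteq> {}"
  obtains x where "x \<in> S" "\<And>y. y \<in> S \<Longrightarrow> f y \<le> f x"
proof -
  have "Max (f ` S) \<in> f ` S"
    using assms by simp
  then obtain x where "x \<in> S" "f x = Max (f ` S)"
    by (metis imageE)
  then show ?thesis
    using that assms(1) by simp
qed

locale finite_partition =
  fixes V :: "'a set" and P :: "'a set set"
  assumes finite_vertices: "finite V" and partition: "partition_on V P"
begin

lemma finite_parts: "finite P"
  using finite_elements[OF finite_vertices partition] .

lemma part_subset: "A \<in> P \<Longrightarrow> A \<subseteq> V"
  using partition_onD1[OF partition] by blast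

lemma finite_part: "A \<in> P \<Longrightarrow> finite A"
  using part_subset finite_vertices finite_subset by blast

lemma part_unique: "A \<in> P \<Longrightarrow> B \<in> P \<Longrightarrow> x \<in> A \<Longrightarrow> x \<in> B \<Longrightarrow> A = B"
  using partition_onD2[OF partition] by (auto simp: disjoint_def)

lemma part_exists:
  assumes "x \<in> V"
  obtains A where "A \<in> P" "x \<in> A"
  using partition_onD1[OF partition] assms by blast

lemma mdeg_eq_sum_parts: "keys u \<subseteq> V \<Longrightarrow> mdeg u = (\<Sum>A\<in>P. deg_on u A)"
  using partition_onD1[OF partition] partition_onD2[OF partition] finite_part
    sum.Union_disjoint_sets[of P "lookup u"] finite_vertices
  by (simp add: mdeg_eq_deg_on deg_on_def)

lemma sum_parts_le_mdeg: "keys u \<subseteq> V \<Longrightarrow> S \<subseteq> P \<Longrightarrow> (\<Sum>A\<in>S. deg_on u A) \<le> mdeg u"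
  using sum_mono2[OF finite_parts, of S "deg_on u"] by (simp add: mdeg_eq_sum_parts)

definition part_bounded :: "nat \<Rightarrow> ('a \<Rightarrow>\<^sub>0 nat) set" where
  "part_bounded q = {u. keys u \<subseteq> V \<and> mdeg u = 2 * q \<and> (\<forall>A\<in>P. deg_on u A \<le> q)}"

lemma part_boundedD:
  assumes "u \<in> part_bounded q"
  shows "keys u \<subseteq> V" "mdeg u = 2 * q" "A \<in> P \<Longrightarrow> deg_on u A \<le> q"
  using assms by (auto simp: part_bounded_def)

lemma part_bounded_lookup_pos: "u \<in> part_bounded q \<Longrightarrow> 0 < lookup u x \<Longrightarrow> x \<in> V"
  using part_boundedD(1) by (fastforce simp: in_keys_iff)

lemma part_bounded_mdeg_eq_deg_on:
  "u \<in> part_bounded q \<Longrightarrow> mdeg u = deg_on u V"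
  using part_boundedD(1) finite_vertices by (simp add: mdeg_eq_deg_on)

lemma part_bounded_pos: "u \<in> part_bounded q \<Longrightarrow> w \<in> part_bounded q \<Longrightarrow> u \<noteq> w \<Longrightarrow> 0 < q"
  using part_boundedD(2) by (metis mdeg_eq_0_iff mult_0_right neq0_conv)

lemma part_bounded_three_parts:
  assumes "u \<in> part_bounded q" "A \<in> P" "B \<in> P" "C \<in> P" "A \<noteq> B" "A \<noteq> C" "B \<noteq> C"
  shows "deg_on u A + deg_on u B + deg_on u C \<le> 2 * q"
  using sum_parts_le_mdeg[of u "{A, B, C}"] assms part_boundedD[OF assms(1)] by simp

lemma move_unit_in_part_bounded:
  assumes u: "u \<in> part_bounded q" and "1 \<le> lookup u a" "b \<in> V"
    and room: "\<And>C. C \<in> P \<Longrightarrow> b \<in> C \<Longrightarrow> a \<notin> C \<Longrightarrow> deg_on u C < q"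
  shows "move_unit u a b \<in> part_bounded q"
proof -
  have "deg_on (move_unit u a b) C \<le> q" if "C \<in> P" for C
    using deg_on_move_unit[OF assms(2) finite_part[OF that], of b] part_boundedD(3)[OF u that] room[OF that]
    by (cases "a \<in> C"; cases "b \<in> C") auto
  then show ?thesis
    using u keys_move_unit[of u a b] \<open>b \<in> V\<close> \<open>1 \<le> lookup u a\<close>
    by (auto simp: part_bounded_def mdeg_move_unit)
qed

lemma move_unit_in_part_bounded_same_part:
  assumes "u \<in> part_bounded q" "1 \<le> lookup u a" "A \<in> P" "a \<in> A" "b \<in> A"
  shows "move_unit u a b \<in> part_bounded q"
  using assms part_unique part_subset by (intro move_unit_in_part_bounded) blast+

lemma simple_graph_multipartite_edges: "simple_graph V (multipartite_edges P)"
  unfolding simple_graph_def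
proof (intro conjI finite_vertices ballI)
  fix e assume "e \<in> multipartite_edges P"
  then obtain x y A B where AB: "A \<in> P" "B \<in> P" "A \<noteq> B" "x \<in> A" "y \<in> B" and "e = {x, y}"
    unfolding multipartite_edges_def by blast
  moreover have "x \<noteq> y"
    using part_unique[OF AB(1,2)] AB(3-5) by blast
  moreover have "x \<in> V" "y \<in> V"
    using part_subset AB by blast+
  ultimately show "\<exists>x y. x \<noteq> y \<and> x \<in> V \<and> y \<in> V \<and> e = {x, y}"
    by blast
qed

lemma deg_on_edge_mon_le:
  assumes "e \<in> multipartite_edges P" "C \<in> P"
  shows "deg_on (edge_mon e) C \<le> 1"
proof -
  obtain x y A B where AB: "A \<in> P" "B \<in> P" "A \<noteq> B" "x \<in> A" "y \<in> B" and e: "e = {x, y}"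
    using assms(1) unfolding multipartite_edges_def by blast
  have "\<not> (x \<in> C \<and> y \<in> C)"
    using part_unique[OF assms(2) AB(1)] part_unique[OF assms(2) AB(2)] AB(3-5) by blast
  then have "C \<inter> e \<subseteq> {x} \<or> C \<inter> e \<subseteq> {y}"
    using e by blast
  then have "card (C \<inter> e) \<le> 1"
    using card_mono[of "{x}" "C \<inter> e"] card_mono[of "{y}" "C \<inter> e"] by auto
  then show ?thesis
    using finite_part[OF assms(2)] e by (simp add: deg_on_edge_mon)
qed

lemma pow_gens_subset_part_bounded: "pow_gens (multipartite_edges P) q \<subseteq> part_bounded q"
proof
  fix u assume u: "u \<in> pow_gens (multipartite_edges P) q"
  then obtain M where M: "u = (\<Sum>e\<in>#M. edge_mon e)" "size M = q" "set_mset M \<subseteq> multipartite_edges P"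
    unfolding pow_gens_def by blast
  have "deg_on u C \<le> q" if "C \<in> P" for C
  proof -
    have "deg_on u C = (\<Sum>e\<in>#M. deg_on (edge_mon e) C)"
      unfolding M(1) by (induction M) simp_all
    also have "\<dots> \<le> (\<Sum>e\<in>#M. 1)"
      using M(3) deg_on_edge_mon_le[OF _ that] by (intro sum_mset_mono) blast
    finally show ?thesis
      using M(2) by simp
  qed
  then show "u \<in> part_bounded q"
    using pow_gens_simple_graph[OF simple_graph_multipartite_edges u] by (simp add: part_bounded_def)
qed

lemma part_bounded_two_largest_parts:
  assumes u: "u \<in> part_bounded q" and "0 < q"
  obtains A B where "A \<in> P" "B \<in> P" "A \<noteq> B" "0 < deg_on u B"
    "\<And>C. C \<in> P \<Longrightarrow> deg_on u C \<le> deg_on u A" "\<And>C. C \<in> P - {A} \<Longrightarrow> deg_on u C \<le> deg_on u B"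
proof -
  have sum_parts: "(\<Sum>C\<in>P. deg_on u C) = 2 * q"
    using mdeg_eq_sum_parts part_boundedD(1,2)[OF u] by simp
  then have "P \<noteq> {}"
    using \<open>0 < q\<close> by auto
  then obtain A where A: "A \<in> P" "\<And>C. C \<in> P \<Longrightarrow> deg_on u C \<le> deg_on u A"
    using obtain_max_on_finite[OF finite_parts] by metis
  have "deg_on u A + (\<Sum>C\<in>P - {A}. deg_on u C) = 2 * q"
    using sum_parts sum.remove[OF finite_parts A(1), of "deg_on u"] by simp
  then have "0 < (\<Sum>C\<in>P - {A}. deg_on u C)"
    using part_boundedD(3)[OF u A(1)] \<open>0 < q\<close> by linarith
  then obtain B0 where "B0 \<in> P - {A}" "0 < deg_on u B0"
    by (metis gr_zeroI sum.neutral less_irrefl)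
  moreover obtain B where "B \<in> P - {A}" "\<And>C. C \<in> P - {A} \<Longrightarrow> deg_on u C \<le> deg_on u B"
    using obtain_max_on_finite[of "P - {A}" "deg_on u"] finite_parts \<open>B0 \<in> P - {A}\<close> by blast
  ultimately show ?thesis
    using that[of A B] A by fastforce
qed

text \<open>Peel off an edge between the two parts of largest degree: afterwards every part still has
  degree at most q, because a third part cannot exceed the two largest ones.\<close>

lemma part_bounded_Suc_decompose:
  assumes u: "u \<in> part_bounded (Suc q)"
  obtains x y u' where "{x, y} \<in> multipartite_edges P" "u' \<in> part_bounded q" "u = edge_mon {x, y} + u'"
proof -
  obtain A B where AB: "A \<in> P" "B \<in> P" "A \<noteq> B" "0 < deg_on u B"
    and A_max: "\<And>C. C \<in> P \<Longrightarrow> deg_on u C \<le> deg_on u A"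
    and B_max: "\<And>C. C \<in> P - {A} \<Longrightarrow> deg_on u C \<le> deg_on u B"
    using part_bounded_two_largest_parts[OF u] by blast
  moreover have "0 < deg_on u A"
    using A_max[OF AB(2)] AB(4) by linarith
  ultimately obtain x y where xy: "x \<in> A" "0 < lookup u x" "y \<in> B" "0 < lookup u y"
    using deg_on_posD by metis
  then have "x \<noteq> y"
    using part_unique[OF AB(1,2)] AB(3) by blast
  define u' where "u' = u - edge_mon {x, y}"
  have u_eq: "u = edge_mon {x, y} + u'"
    using xy \<open>x \<noteq> y\<close> by (intro poly_mapping_eqI) (auto simp: u'_def lookup_add lookup_minus lookup_edge_mon)
  have "deg_on u' C \<le> q" if "C \<in> P" for C
  proof -
    have split: "deg_on u C = deg_on (edge_mon {x, y}) C + deg_on u' C"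
      using u_eq deg_on_add by metis
    show ?thesis
    proof (cases "C = A \<or> C = B")
      case True
      then have "1 \<le> deg_on (edge_mon {x, y}) C"
        using xy finite_part[OF that] by (auto simp: deg_on_edge_mon Suc_le_eq card_gt_0_iff)
      then show ?thesis
        using split part_boundedD(3)[OF u that] by linarith
    next
      case False
      then have "deg_on u A + deg_on u B + deg_on u C \<le> 2 * Suc q"
        using part_bounded_three_parts[OF u AB(1,2) that AB(3)] by auto
      moreover have "deg_on u C \<le> deg_on u B" "deg_on u B \<le> deg_on u A"
        using A_max B_max AB(2) that False by auto
      ultimately have "deg_on u C \<le> q"
        by presburger
      then show ?thesis
        using split by linarith
    qed
  qed
  moreover have "keys u' \<subseteq> V" "mdeg u' = 2 * q"
    using u_eq part_boundedD[OF u] keys_add[of "edge_mon {x, y}" u'] \<open>x \<noteq> y\<close>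
    by (auto simp: in_keys_iff lookup_add mdeg_add mdeg_edge_mon)
  ultimately have "u' \<in> part_bounded q"
    by (simp add: part_bounded_def)
  moreover have "{x, y} \<in> multipartite_edges P"
    using AB xy by (intro multipartite_edgesI)
  ultimately show ?thesis
    using that u_eq by blast
qed

lemma part_bounded_subset_pow_gens: "part_bounded q \<subseteq> pow_gens (multipartite_edges P) q"
proof (induction q)
  case 0
  have "part_bounded 0 \<subseteq> {0}"
    by (auto simp: part_bounded_def mdeg_eq_0_iff)
  also have "{0} \<subseteq> pow_gens (multipartite_edges P) 0"
    unfolding pow_gens_def by (intro subsetI CollectI exI[of _ "{#}"]) simp
  finally show ?case .
next
  case (Suc q)
  show ?case
  proof
    fix u assume "u \<in> part_bounded (Suc q)"
    then obtain x y u' where "{x, y} \<in> multipartite_edges P" "u' \<in> part_bounded q" "u = edge_mon {x, y} + u'"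
      by (rule part_bounded_Suc_decompose)
    moreover obtain M where "u' = (\<Sum>e\<in>#M. edge_mon e)" "size M = q" "set_mset M \<subseteq> multipartite_edges P"
      using Suc.IH \<open>u' \<in> part_bounded q\<close> unfolding pow_gens_def by blast
    ultimately show "u \<in> pow_gens (multipartite_edges P) (Suc q)"
      unfolding pow_gens_def by (intro CollectI exI[of _ "add_mset {x, y} M"]) simp
  qed
qed

lemma pow_gens_multipartite_edges: "pow_gens (multipartite_edges P) q = part_bounded q"
  using pow_gens_subset_part_bounded part_bounded_subset_pow_gens by blast

text \<open>If every position where v exceeds u lay in a part, avoiding a, that u fills to capacity q,
  then all those positions lie in one such part C (a third full part would exceed degree 2q),
  and v would be dominated by u outside C.\<close>

lemma part_bounded_exchange_target:
  assumes u: "u \<in> part_bounded q" and v: "v \<in> part_bounded q" and a: "lookup v a < lookup u a"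
  shows "\<exists>c. lookup u c < lookup v c \<and> (\<forall>C\<in>P. c \<in> C \<longrightarrow> a \<notin> C \<longrightarrow> deg_on u C < q)"
proof (rule ccontr)
  assume "\<not> ?thesis"
  then have full: "\<exists>C\<in>P. c \<in> C \<and> a \<notin> C \<and> deg_on u C = q" if "lookup u c < lookup v c" for c
    using that part_boundedD(3)[OF u] by (meson le_neq_implies_less)
  have "a \<in> V"
    using part_bounded_lookup_pos[OF u] a by simp
  then obtain A where A: "A \<in> P" "a \<in> A"
    by (rule part_exists)
  have "1 \<le> deg_on u A"
    using lookup_le_deg_on[OF finite_part[OF A(1)] A(2), of u] a by linarith
  have "u \<noteq> v"
    using a by blast
  then obtain c0 where "lookup u c0 < lookup v c0"
    using part_boundedD(2)[OF u] part_boundedD(2)[OF v] by (metis ex_lookup_less_if_mdeg_eq)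
  then obtain C where C: "C \<in> P" "a \<notin> C" "deg_on u C = q"
    using full by blast
  have "A \<noteq> C"
    using A C by blast
  have dominated: "lookup v x \<le> lookup u x" if "x \<in> V - C" for x
  proof (rule ccontr)
    assume "\<not> ?thesis"
    then obtain D where D: "D \<in> P" "x \<in> D" "a \<notin> D" "deg_on u D = q"
      using full by (meson not_le)
    then have "D \<noteq> C" "A \<noteq> D"
      using that A by auto
    then show False
      using part_bounded_three_parts[OF u A(1) D(1) C(1)] \<open>A \<noteq> C\<close> \<open>1 \<le> deg_on u A\<close> C(3) D(4) by auto
  qed
  have "deg_on v C \<le> deg_on u C"
    using part_boundedD(3)[OF v C(1)] C(3) by simp
  then have "deg_on v V < deg_on u V"
    using deg_on_less_if_dominated[OF finite_vertices part_subset[OF C(1)] dominated] \<open>a \<in> V\<close> C(2) a by blast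
  then show False
    using u v by (simp add: part_boundedD(2) flip: part_bounded_mdeg_eq_deg_on)
qed

lemma part_bounded_sym_exchange: "sym_exchange_property (part_bounded q)"
  unfolding sym_exchange_property_def
proof (intro ballI allI impI)
  fix u v a assume u: "u \<in> part_bounded q" and v: "v \<in> part_bounded q" and a: "lookup v a < lookup u a"
  then have "a \<in> V"
    using part_bounded_lookup_pos by simp
  then obtain A where A: "A \<in> P" "a \<in> A"
    by (rule part_exists)
  show "\<exists>c. lookup u c < lookup v c \<and> move_unit u a c \<in> part_bounded q \<and> move_unit v c a \<in> part_bounded q"
  proof (cases "\<exists>c\<in>A. lookup u c < lookup v c")
    case True
    then obtain c where "c \<in> A" "lookup u c < lookup v c"
      by blast
    then show ?thesis
      using a A u v by (intro exI[of _ c]) (auto intro: move_unit_in_part_bounded_same_part)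
  next
    case False
    then have "deg_on v A < deg_on u A"
      using a A finite_part[OF A(1)] unfolding deg_on_def by (intro sum_strict_mono_ex1) (auto simp: not_less)
    then have room: "deg_on v A < q"
      using part_boundedD(3)[OF u A(1)] by linarith
    obtain c where c: "lookup u c < lookup v c" "\<And>C. C \<in> P \<Longrightarrow> c \<in> C \<Longrightarrow> a \<notin> C \<Longrightarrow> deg_on u C < q"
      using part_bounded_exchange_target[OF u v a] by blast
    have "move_unit u a c \<in> part_bounded q"
      using u a c part_bounded_lookup_pos[OF v] by (intro move_unit_in_part_bounded) auto
    moreover have "move_unit v c a \<in> part_bounded q"
      using v c(1) \<open>a \<in> V\<close> room part_unique[OF _ A(1) _ A(2)] by (intro move_unit_in_part_bounded) auto
    ultimately show ?thesis
      using c(1) by blast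
  qed
qed

lemma polymatroid_part_bounded: "polymatroid (part_bounded q)"
proof (rule polymatroidI)
  show "finite (part_bounded q)"
    using finite_pow_gens[OF simple_graph_multipartite_edges] by (simp flip: pow_gens_multipartite_edges)
qed (auto simp: part_boundedD(2) part_bounded_sym_exchange)

text \<open>Besides C, v fills at most one part D to capacity, while k has degree more than q outside C,
  so k has a unit outside C and D.\<close>

lemma part_bounded_room_outside:
  assumes v: "v \<in> part_bounded q" and k: "k \<in> part_bounded q" and C: "C \<in> P"
    and full: "deg_on v C = q" and room: "deg_on k C < q"
  obtains y where "y \<in> V - C" "0 < lookup k y" "\<And>D. D \<in> P \<Longrightarrow> y \<in> D \<Longrightarrow> deg_on v D < q"
proof -
  have k_outside: "q < deg_on k (V - C)"
    using deg_on_subset_diff[OF finite_vertices part_subset[OF C], of k] part_bounded_mdeg_eq_deg_on[OF k]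
      part_boundedD(2)[OF k] room by linarith
  then obtain y0 where y0: "y0 \<in> V - C" "0 < lookup k y0"
    using deg_on_posD[of k "V - C"] by auto
  then obtain D where D: "D \<in> P" "y0 \<in> D"
    using part_exists by blast
  show ?thesis
  proof (cases "deg_on v D < q")
    case True
    then show ?thesis
      using that y0 D part_unique[OF _ D(1) _ D(2)] by blast
  next
    case False
    then have "deg_on v D = q"
      using part_boundedD(3)[OF v D(1)] by simp
    have "D \<noteq> C" "D \<subseteq> V - C"
      using D y0(1) part_subset[OF D(1)] part_unique[OF C D(1)] by blast+
    then have "deg_on k (V - C) = deg_on k D + deg_on k (V - C - D)"
      using finite_vertices by (simp add: deg_on_subset_diff)
    then have "0 < deg_on k (V - C - D)"
      using part_boundedD(3)[OF k D(1)] k_outside by linarith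
    then obtain y where y: "y \<in> V - C - D" "0 < lookup k y"
      using deg_on_posD by blast
    have "deg_on v D' < q" if "D' \<in> P" "y \<in> D'" for D'
    proof -
      have "D' \<noteq> C" "D' \<noteq> D"
        using that y(1) D(1) C by auto
      then show ?thesis
        using part_bounded_three_parts[OF v C D(1) that(1)] \<open>D \<noteq> C\<close> full \<open>deg_on v D = q\<close> room
        by auto
    qed
    then show ?thesis
      using that y by blast
  qed
qed

lemma part_bounded_rebalance:
  assumes v: "v \<in> part_bounded q" and k: "k \<in> part_bounded q" and C: "C \<in> P"
    and full: "deg_on v C = q" and room: "deg_on k C < q"
  obtains c y where "c \<in> C" "y \<notin> C" "1 \<le> lookup v c" "1 \<le> lookup k y"
    "move_unit v c y \<in> part_bounded q" "move_unit k y c \<in> part_bounded q"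
proof -
  obtain c where c: "c \<in> C" "0 < lookup v c"
    using deg_on_posD[of v C] full room by auto
  obtain y where y: "y \<in> V - C" "0 < lookup k y" "\<And>D. D \<in> P \<Longrightarrow> y \<in> D \<Longrightarrow> deg_on v D < q"
    using part_bounded_room_outside[OF assms] by blast
  have "move_unit v c y \<in> part_bounded q"
    using v c y by (intro move_unit_in_part_bounded) auto
  moreover have "move_unit k y c \<in> part_bounded q"
    using k y c part_subset[OF C] room part_unique[OF _ C _ c(1)] by (intro move_unit_in_part_bounded) auto
  ultimately show ?thesis
    using that[of c y] c y by (simp add: Suc_le_eq)
qed

lemma move_unit_into_part:
  assumes "u \<in> part_bounded q" "1 \<le> lookup u a" "C \<in> P" "b \<in> C" "deg_on u C < q"
  shows "move_unit u a b \<in> part_bounded q"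
  using assms part_subset part_unique[OF _ assms(3) _ assms(4)] by (intro move_unit_in_part_bounded) blast+

lemma part_bounded_swap_via_rebalance:
  assumes u: "u \<in> part_bounded q" and v: "v \<in> part_bounded q" and k: "k \<in> part_bounded q"
    and Z: "set_mset Z \<subseteq> part_bounded q" and C: "C \<in> P" "\<xi> \<in> C" "\<rho> \<notin> C"
    and "1 \<le> lookup v \<rho>" "1 \<le> lookup u \<xi>" and u': "move_unit u \<xi> \<rho> \<in> part_bounded q"
    and full: "deg_on v C = q" and room: "deg_on k C < q"
  shows "\<exists>X'. sym_exchange_equiv (part_bounded q) (add_mset u (add_mset v (add_mset k Z))) X'
    \<and> move_unit u \<xi> \<rho> \<in># X'"
proof -
  have sep: "sym_exchange_property (part_bounded q)"
    by (rule part_bounded_sym_exchange)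
  obtain c y where cy: "c \<in> C" "y \<notin> C" "1 \<le> lookup v c" "1 \<le> lookup k y"
    and moved: "move_unit v c y \<in> part_bounded q" "move_unit k y c \<in> part_bounded q"
    using part_bounded_rebalance[OF v k C(1) full room] by blast
  let ?v2 = "move_unit v c y" and ?k2 = "move_unit k y c"
  have "sym_exchange_equiv (part_bounded q) (add_mset v (add_mset k (add_mset u Z)))
      (add_mset ?v2 (add_mset ?k2 (add_mset u Z)))"
    using u Z by (intro sym_exchange_equiv_swap_add[OF sep v k cy(3,4) moved]) auto
  then have step1: "sym_exchange_equiv (part_bounded q) (add_mset u (add_mset v (add_mset k Z)))
      (add_mset u (add_mset ?v2 (add_mset ?k2 Z)))"
    by (simp add: add_mset_commute)
  have "deg_on ?v2 C + 1 = deg_on v C"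
    using deg_on_move_unit[OF cy(3) finite_part[OF C(1)], of y] cy(1,2) by simp
  moreover have "1 \<le> lookup ?v2 \<rho>"
    using \<open>1 \<le> lookup v \<rho>\<close> cy(1) C(3) by (auto simp: lookup_move_unit)
  ultimately have "move_unit ?v2 \<rho> \<xi> \<in> part_bounded q"
    using move_unit_into_part[OF moved(1) _ C(1,2)] full by simp
  then have "sym_exchange_equiv (part_bounded q) (add_mset u (add_mset ?v2 (add_mset ?k2 Z)))
      (add_mset (move_unit u \<xi> \<rho>) (add_mset (move_unit ?v2 \<rho> \<xi>) (add_mset ?k2 Z)))"
    using moved Z \<open>1 \<le> lookup ?v2 \<rho>\<close>
    by (intro sym_exchange_equiv_swap_add[OF sep u _ \<open>1 \<le> lookup u \<xi>\<close> _ u']) auto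
  with step1 show ?thesis
    using equiv_trans by fastforce
qed

lemma part_bounded_swap_into_part:
  assumes u: "u \<in> part_bounded q" and v: "v \<in> part_bounded q" and Z: "set_mset Z \<subseteq> part_bounded q"
    and C: "C \<in> P" "\<xi> \<in> C" "\<rho> \<notin> C" and "1 \<le> lookup v \<rho>" "1 \<le> lookup u \<xi>"
    and u': "move_unit u \<xi> \<rho> \<in> part_bounded q"
    and deficient: "(\<Sum>z\<in>#add_mset v Z. deg_on z C) < q * size (add_mset v Z)"
  shows "\<exists>X'. sym_exchange_equiv (part_bounded q) (add_mset u (add_mset v Z)) X' \<and> move_unit u \<xi> \<rho> \<in># X'"
proof (cases "deg_on v C < q")
  case True
  then have "move_unit v \<rho> \<xi> \<in> part_bounded q"
    using move_unit_into_part[OF v \<open>1 \<le> lookup v \<rho>\<close> C(1,2)] by simp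
  then show ?thesis
    using sym_exchange_equiv_swap_add[OF part_bounded_sym_exchange u v \<open>1 \<le> lookup u \<xi>\<close>
        \<open>1 \<le> lookup v \<rho>\<close> u' _ Z] by auto
next
  case False
  then have full: "deg_on v C = q"
    using part_boundedD(3)[OF v C(1)] by simp
  have "\<exists>k\<in>#Z. deg_on k C < q"
  proof (rule ccontr)
    assume "\<not> ?thesis"
    then have "q * size Z \<le> (\<Sum>z\<in>#Z. deg_on z C)"
      by (intro sum_mset_lower_bound) (simp add: not_less)
    then show False
      using deficient full by simp
  qed
  then obtain k Z' where k: "Z = add_mset k Z'" "deg_on k C < q"
    by (metis insert_DiffM)
  then show ?thesis
    using part_bounded_swap_via_rebalance[OF u v _ _ C \<open>1 \<le> lookup v \<rho>\<close> \<open>1 \<le> lookup u \<xi>\<close> u' full k(2)] Z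
    by auto
qed

text \<open>Counting degrees in C on both sides of sum X = w + sum Y, where every element of Y has
  degree at most q in C.\<close>

lemma part_bounded_deficient_part:
  assumes X: "set_mset X \<subseteq> part_bounded q" and Y: "set_mset Y \<subseteq> part_bounded q"
    and w: "w \<in> part_bounded q" and sums: "sum_mset X = w + sum_mset Y" and "0 < q"
    and C: "C \<in> P" and u: "X = add_mset u Z" "deg_on w C < deg_on u C"
  shows "(\<Sum>z\<in>#Z. deg_on z C) < q * size Z"
proof -
  have "mdeg (sum_mset X) = 2 * q * size X" "mdeg (sum_mset Y) = 2 * q * size Y"
    using X Y part_boundedD(2) by (intro mdeg_sum_mset; blast)+
  then have "2 * q * size X = 2 * q * Suc (size Y)"
    using sums part_boundedD(2)[OF w] by (simp add: mdeg_add)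
  then have "size Z = size Y"
    using \<open>0 < q\<close> u(1) by simp
  have "(\<Sum>y\<in>#Y. deg_on y C) \<le> (\<Sum>y\<in>#Y. q)"
    using Y part_boundedD(3)[OF _ C] by (intro sum_mset_mono) blast
  then have "deg_on (sum_mset X) C \<le> deg_on w C + q * size Y"
    by (simp add: sums deg_on_sum_mset mult.commute)
  moreover have "deg_on (sum_mset X) C = deg_on u C + (\<Sum>z\<in>#Z. deg_on z C)"
    by (simp add: u(1) deg_on_sum_mset)
  ultimately show ?thesis
    unfolding \<open>size Z = size Y\<close> using u(2) by linarith
qed

lemma part_bounded_excess_elsewhere:
  assumes u: "u \<in> part_bounded q" and w: "w \<in> part_bounded q"
    and A: "A \<in> P" "deg_on u A < deg_on w A"
  obtains C \<xi> where "C \<in> P" "C \<noteq> A" "deg_on w C < deg_on u C" "\<xi> \<in> C" "lookup w \<xi> < lookup u \<xi>"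
proof -
  have "\<exists>C\<in>P - {A}. deg_on w C < deg_on u C"
  proof (rule ccontr)
    assume "\<not> ?thesis"
    then have "(\<Sum>C\<in>P - {A}. deg_on u C) \<le> (\<Sum>C\<in>P - {A}. deg_on w C)"
      by (intro sum_mono) (simp add: not_less)
    moreover have "(\<Sum>C\<in>P. deg_on u C) = (\<Sum>C\<in>P. deg_on w C)"
      using part_boundedD(1,2)[OF u] part_boundedD(1,2)[OF w] by (simp flip: mdeg_eq_sum_parts)
    ultimately show False
      using A(2) sum.remove[OF finite_parts A(1), of "deg_on u"]
        sum.remove[OF finite_parts A(1), of "deg_on w"] by linarith
  qed
  then obtain C where C: "C \<in> P" "C \<noteq> A" "deg_on w C < deg_on u C"
    by blast
  have "\<exists>\<xi>\<in>C. lookup w \<xi> < lookup u \<xi>"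
  proof (rule ccontr)
    assume "\<not> ?thesis"
    then have "deg_on u C \<le> deg_on w C"
      unfolding deg_on_def by (intro sum_mono) (simp add: not_less)
    with C(3) show False
      by simp
  qed
  with C that show ?thesis
    by blast
qed

text \<open>One unit of u moves from a position where u exceeds w to the position \<rho>, with v moving a
  unit of \<rho> back. Within the part of \<rho> this is always possible; otherwise the excess of u lies
  in another part C, and v must first get room in C, by rebalancing it against an element with
  room in C.\<close>

lemma part_bounded_approach_step:
  assumes X: "set_mset (add_mset u (add_mset v Z)) \<subseteq> part_bounded q" and Y: "set_mset Y \<subseteq> part_bounded q"
    and w: "w \<in> part_bounded q" and sums: "sum_mset (add_mset u (add_mset v Z)) = w + sum_mset Y"
    and \<rho>: "lookup u \<rho> < lookup w \<rho>" "1 \<le> lookup v \<rho>"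
  shows "\<exists>\<xi> X'. lookup w \<xi> < lookup u \<xi> \<and> move_unit u \<xi> \<rho> \<in># X'
    \<and> sym_exchange_equiv (part_bounded q) (add_mset u (add_mset v Z)) X'"
proof -
  have uB: "u \<in> part_bounded q" and vB: "v \<in> part_bounded q" and ZB: "set_mset Z \<subseteq> part_bounded q"
    using X by auto
  obtain A where A: "A \<in> P" "\<rho> \<in> A"
    using \<rho>(1) part_exists part_bounded_lookup_pos[OF w] by (metis gr_zeroI not_less_zero)
  show ?thesis
  proof (cases "\<exists>\<xi>\<in>A. lookup w \<xi> < lookup u \<xi>")
    case True
    then obtain \<xi> where \<xi>: "\<xi> \<in> A" "lookup w \<xi> < lookup u \<xi>"
      by blast
    then have "sym_exchange_equiv (part_bounded q) (add_mset u (add_mset v Z))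
        (add_mset (move_unit u \<xi> \<rho>) (add_mset (move_unit v \<rho> \<xi>) Z))"
      using uB vB ZB A \<rho>(2)
      by (intro sym_exchange_equiv_swap_add[OF part_bounded_sym_exchange])
        (auto intro: move_unit_in_part_bounded_same_part)
    with \<xi> show ?thesis
      by (intro exI[of _ \<xi>] exI[of _ "add_mset (move_unit u \<xi> \<rho>) (add_mset (move_unit v \<rho> \<xi>) Z)"]) simp
  next
    case False
    then have "deg_on u A < deg_on w A"
      using \<rho> A finite_part[OF A(1)] unfolding deg_on_def by (intro sum_strict_mono_ex1) (auto simp: not_less)
    then obtain C \<xi> where C: "C \<in> P" "C \<noteq> A" "deg_on w C < deg_on u C"
      and \<xi>: "\<xi> \<in> C" "lookup w \<xi> < lookup u \<xi>"
      using part_bounded_excess_elsewhere[OF uB w A(1)] by blast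
    have "deg_on u A < q"
      using \<open>deg_on u A < deg_on w A\<close> part_boundedD(3)[OF w A(1)] by linarith
    moreover have "1 \<le> lookup u \<xi>"
      using \<xi>(2) by simp
    ultimately have u': "move_unit u \<xi> \<rho> \<in> part_bounded q"
      using move_unit_into_part[OF uB _ A] by blast
    have "\<rho> \<notin> C"
      using part_unique[OF A(1) C(1) A(2)] C(2) by blast
    have "0 < q"
      using \<rho>(1) part_bounded_pos[OF uB w] by blast
    then have "(\<Sum>z\<in>#add_mset v Z. deg_on z C) < q * size (add_mset v Z)"
      using part_bounded_deficient_part[OF X Y w sums _ C(1) refl C(3)] by blast
    then show ?thesis
      using part_bounded_swap_into_part[OF uB vB ZB C(1) \<xi>(1) \<open>\<rho> \<notin> C\<close> \<rho>(2) \<open>1 \<le> lookup u \<xi>\<close> u'] \<xi>(2)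
      by blast
  qed
qed

lemma part_bounded_approach:
  assumes X: "set_mset X \<subseteq> part_bounded q" and Y: "set_mset Y \<subseteq> part_bounded q"
    and w: "w \<in> part_bounded q" and u: "u \<in># X" "u \<noteq> w" and sums: "sum_mset X = w + sum_mset Y"
  shows "\<exists>X' u'. sym_exchange_equiv (part_bounded q) X X' \<and> u' \<in># X' \<and> deficit u' w < deficit u w"
proof -
  obtain Z where XZ: "X = add_mset u Z"
    using u(1) by (metis insert_DiffM)
  have "u \<in> part_bounded q"
    using X u(1) by blast
  then obtain \<rho> where \<rho>: "lookup u \<rho> < lookup w \<rho>"
    using ex_lookup_less_if_mdeg_eq part_boundedD(2) w u(2) by metis
  moreover have "lookup u \<rho> + lookup (sum_mset Z) \<rho> = lookup w \<rho> + lookup (sum_mset Y) \<rho>"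
    using arg_cong[OF sums, of "\<lambda>s. lookup s \<rho>"] by (simp add: XZ lookup_add)
  ultimately obtain v where v: "v \<in># Z" "1 \<le> lookup v \<rho>"
    using lookup_sum_mset_pos[of Z \<rho>] by (auto simp: Suc_le_eq)
  then obtain Z1 where "Z = add_mset v Z1"
    by (metis insert_DiffM)
  then have "set_mset (add_mset u (add_mset v Z1)) \<subseteq> part_bounded q"
    "sum_mset (add_mset u (add_mset v Z1)) = w + sum_mset Y" "X = add_mset u (add_mset v Z1)"
    using X sums XZ by simp_all
  then obtain \<xi> X' where "lookup w \<xi> < lookup u \<xi>" "move_unit u \<xi> \<rho> \<in># X'"
    "sym_exchange_equiv (part_bounded q) X X'"
    using part_bounded_approach_step[OF _ Y w _ \<rho> v(2)] by blast
  with \<rho> show ?thesis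
    by (intro exI[of _ X'] exI[of _ "move_unit u \<xi> \<rho>"]) (simp add: deficit_move_unit_less)
qed

lemma part_bounded_sym_exchange_connected:
  assumes "0 < q" "set_mset X \<subseteq> part_bounded q" "set_mset Y \<subseteq> part_bounded q" "sum_mset X = sum_mset Y"
  shows "sym_exchange_equiv (part_bounded q) X Y"
  using part_bounded_approach assms
  by (intro sym_exchange_equiv_if_approach[where d = "2 * q"]) (auto simp: part_boundedD(2))

lemma toric_ideal_part_bounded:
  "0 < q \<Longrightarrow> (toric_ideal (part_bounded q) :: (_ \<Rightarrow>\<^sub>0 'k::field) set)
    = ideal_gen (T_ring (part_bounded q)) (sym_exchange_binomials (part_bounded q))"
  by (intro toric_ideal_eq_sym_exchange_ideal part_bounded_sym_exchange_connected)

end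

lemma complete_multipartite_if_polymatroid:
  assumes "simple_graph V E" "no_isolated V E" "V \<noteq> {}" "1 \<le> q" "polymatroid (min_gens E q)"
  shows "complete_multipartite V E"
proof (rule complete_multipartiteI[OF assms(1-3)])
  fix x y z assume "{x, y} \<in> E" "z \<in> V"
  then show "{x, z} \<in> E \<or> {y, z} \<in> E"
    using pow_gens_not_polymatroid[OF assms(1,2,4)] assms(5) min_gens_eq_pow_gens[OF assms(1)] by metis
qed

lemma min_gens_complete_multipartite:
  assumes "simple_graph V E" "complete_multipartite V E"
  obtains P where "finite_partition V P" "\<And>q. min_gens E q = finite_partition.part_bounded V P q"
proof -
  obtain P where P: "finite_partition V P" "E = multipartite_edges P"
    using assms unfolding complete_multipartite_iff simple_graph_def finite_partition_def by blast
  then show ?thesis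
    using that min_gens_eq_pow_gens[OF assms(1)] finite_partition.pow_gens_multipartite_edges[OF P(1)]
    by simp
qed

theorem theorem3p1:
  fixes V :: "'a set" and E :: "'a set set"
  assumes "simple_graph V E" and "no_isolated V E" and "V \<noteq> {}"
  shows "((\<exists>q\<ge>1. polymatroid (min_gens E q)) \<longleftrightarrow> (\<forall>q\<ge>1. polymatroid (min_gens E q)))
    \<and> ((\<forall>q\<ge>1. polymatroid (min_gens E q)) \<longleftrightarrow> complete_multipartite V E)
    \<and> (complete_multipartite V E \<longrightarrow> (\<forall>q\<ge>1.
          (toric_ideal (min_gens E q) :: ((('a \<Rightarrow>\<^sub>0 nat) \<Rightarrow>\<^sub>0 nat) \<Rightarrow>\<^sub>0 'k::field) set)
          = ideal_gen (T_ring (min_gens E q)) (sym_exchange_binomials (min_gens E q))))"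
proof -
  have polymatroid: "polymatroid (min_gens E q)" if "complete_multipartite V E" for q
    using min_gens_complete_multipartite[OF assms(1) that] finite_partition.polymatroid_part_bounded
    by metis
  have toric: "(toric_ideal (min_gens E q) :: (_ \<Rightarrow>\<^sub>0 'k) set)
      = ideal_gen (T_ring (min_gens E q)) (sym_exchange_binomials (min_gens E q))"
    if cm: "complete_multipartite V E" and "1 \<le> q" for q
  proof -
    obtain P where P: "finite_partition V P" "\<And>q. min_gens E q = finite_partition.part_bounded V P q"
      using min_gens_complete_multipartite[OF assms(1) cm] by blast
    show ?thesis
      unfolding P(2) using \<open>1 \<le> q\<close> by (intro finite_partition.toric_ideal_part_bounded[OF P(1)]) simp
  qed
  show ?thesis
    using complete_multipartite_if_polymatroid[OF assms] polymatroid toric by (metis order_refl)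
qed

end
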